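(* Let $N,s,h$ be natural numbers with $s\ge \underline{s}:=h+\max(m_{sum},m_{lb})-1$, $N_{lb}\mid N$ and $L_{sb}\mid h$. Assume that $N,s,h,m_{sum},m_{lb},N_{lb},L_{sb},K_{sb}$, the sets $\alpha_{sb}(0),\ldots,\alpha_{sb}(K_{sb})$ and the function $f_{sb}$ are fixed (do not depend on $n$), and that the functions $f_{sum}$ and $f_{lb}$ are fixed and bounded. Let, for every $n$, the random variables $\varepsilon_1,\ldots,\varepsilon_n$ (with values in $\mathfrak{X}$) have an arbitrary joint distribution (a series scheme); all symbols $o_P(1)$ and all convergences below refer to these distributions as $n\to\infty$. Then $$T_{sum}=\sum_{k=1}^{N_{lb}}\mathcal{Y}_k^{(N,s,h)}(K_{sb}+2)+o_P(1),\quad n\to\infty.$$ If, moreover, there are $(K_{sb}+3)$-dimensional random vectors $\eta_1,\ldots,\eta_N$ such that $$\big(\mathcal{X}_1^{(N,s,h)},\ldots,\mathcal{X}_N^{(N,s,h)}\big)\xrightarrow{d}(\eta_1,\ldots,\eta_N),\quad n\to\infty$$ (joint convergence in distribution of all $N(K_{sb}+3)$ coordinates), then, as $n\to\infty$, $$T_{lb}=N_{lb}\sum_{k=1}^{N_{lb}}\Big(\mathcal{Y}_k^{(N,s,h)}(K_{sb}+1)\Big)^2+o_P(1),\qquad T_{sb}=L_{sb}\sum_{j=0}^{K_{sb}}\Big(\sum_{k=1}^{N_{lb}}\mathcal{Y}_k^{(N,s,h)}(j)\Big)^2+o_P(1),$$ $$\big(\mathcal{Y}_1^{(N,s,h)},\ldots,\mathcal{Y}_{N_{lb}}^{(N,s,h)}\big)\xrightarrow{d}(\zeta_1,\ldots,\zeta_{N_{lb}}),$$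 and consequently $$(T_{sum},T_{lb},T_{sb})\xrightarrow{d}\Bigg(\sum_{k=1}^{N_{lb}}\zeta_k(K_{sb}+2),\ N_{lb}\sum_{k=1}^{N_{lb}}\zeta_k^2(K_{sb}+1),\ L_{sb}\sum_{j=0}^{K_{sb}}\Big(\sum_{k=1}^{N_{lb}}\zeta_k(j)\Big)^2\Bigg),$$ where $\zeta_k=\sum_{i=1}^{N/N_{lb}}\eta_{\frac{N}{N_{lb}}(k-1)+i}$ for $1\le k\le N_{lb}$, with coordinates $\zeta_k(j)$, $0\le j\le K_{sb}+2$.
   Context: Let $\mathfrak{X}\subset\mathbb{R}^d$ (with the Borel $\sigma$-algebra) and let $\mathbf{P}_0$ be a fixed probability distribution on $\mathfrak{X}$. Hypothesis $H_0$: $\varepsilon_1,\ldots,\varepsilon_n$ are independent with common distribution $\mathbf{P}_0$; $\mathbf{E}_{H_0},\mathbf{D}_{H_0},\mathrm{cov}_{H_0},\mathbf{P}_{H_0}$ denote expectation, variance, covariance, probability computed under $H_0$. $[x]$ is the integer part. Fix natural numbers $m_{sum},m_{lb},N_{lb},L_{sb},K_{sb}$, measurable functions $f_{sum}:\mathfrak{X}^{m_{sum}}\to\mathbb{R}$, $f_{lb}:\mathfrak{X}^{m_{lb}}\to\mathbb{R}$, $f_{sb}:\mathfrak{X}^{L_{sb}}\to\mathbb{R}$, and a partition of $f_{sb}(\mathfrak{X}^{L_{sb}})$ into nonempty disjoint (measurable) sets $\alpha_{sb}(0),\ldots,\alpha_{sb}(K_{sb})$. Summing statistic: $E_{sum}=\mathbf{E}_{H_0}f_{sum}(\varepsilon_1,\ldots,\varepsilon_{m_{sum}})$,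 $\sigma_{sum}^2=\mathbf{D}_{H_0}f_{sum}(\varepsilon_1,\ldots,\varepsilon_{m_{sum}})+2\sum_{i=2}^{m_{sum}}\mathrm{cov}_{H_0}(f_{sum}(\varepsilon_i,\ldots,\varepsilon_{i+m_{sum}-1}),f_{sum}(\varepsilon_1,\ldots,\varepsilon_{m_{sum}}))$, $\sigma_{sum}\ge0$; assuming $\sigma_{sum}\in(0,\infty)$, $T_{sum}=\frac{\sum_{i=1}^{n-m_{sum}+1}(f_{sum}(\varepsilon_i,\ldots,\varepsilon_{i+m_{sum}-1})-E_{sum})}{\sigma_{sum}\sqrt{n-m_{sum}+1}}$. Long-block statistic: $L_{lb}=[n/N_{lb}]$, $W_k=\sum_{j=L_{lb}(k-1)+1}^{L_{lb}k-m_{lb}+1}f_{lb}(\varepsilon_j,\ldots,\varepsilon_{j+m_{lb}-1})$ ($1\le k\le N_{lb}$), $E_{lb},\sigma_{lb}\ge0$ defined from $f_{lb},m_{lb}$ exactly as $E_{sum},\sigma_{sum}$ from $f_{sum},m_{sum}$; assuming $\sigma_{lb}\in(0,\infty)$, $T_{lb}=\sum_{k=1}^{N_{lb}}\frac{(W_k-(L_{lb}-m_{lb}+1)E_{lb})^2}{L_{lb}\sigma_{lb}^2}$. Short-block statistic: $N_{sb}=[n/L_{sb}]$, $w(j)=\sum_{i=1}^{N_{sb}}I\{f_{sb}(\varepsilon_{L_{sb}(i-1)+1},\ldots,\varepsilon_{L_{sb}i})\in\alpha_{sb}(j)\}$, $E_{sb}(j)=\mathbf{P}_{H_0}(f_{sb}(\varepsilon_1,\ldots,\varepsilon_{L_{sb}})\in\alpha_{sb}(j))$;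 assuming all $E_{sb}(j)>0$, $T_{sb}=\sum_{j=0}^{K_{sb}}\frac{(w(j)-N_{sb}E_{sb}(j))^2}{N_{sb}E_{sb}(j)}$. It is a standing assumption that $\sigma_{sum},\sigma_{lb}\in(0,\infty)$ and $E_{sb}(j)>0$ for all $j$. Auxiliary vectors: $L=[n/N]$. For $\theta=(\theta_1,\ldots,\theta_s)\in\mathfrak{X}^s$ define $f^{(s)}(\theta)=(f_0^{(s)}(\theta),\ldots,f^{(s)}_{K_{sb}+2}(\theta))$ by: for $0\le j\le K_{sb}$, $f_j^{(s)}(\theta)=E_{sb}(j)^{-1/2}\sum_{u=1}^{h/L_{sb}}I\{f_{sb}(\theta_{L_{sb}(u-1)+1},\ldots,\theta_{L_{sb}u})\in\alpha_{sb}(j)\}$; $f^{(s)}_{K_{sb}+1}(\theta)=\sigma_{lb}^{-1}\sum_{u=1}^h f_{lb}(\theta_u,\ldots,\theta_{u+m_{lb}-1})$; $f^{(s)}_{K_{sb}+2}(\theta)=\sigma_{sum}^{-1}\sum_{u=1}^h f_{sum}(\theta_u,\ldots,\theta_{u+m_{sum}-1})$. For $1\le k\le N$, $0\le j\le K_{sb}+2$: $\mathcal{X}_k^{(N,s,h)}(j)=n^{-1/2}\sum_{i\in\mathbb{Z}:\ L(k-1)/h\le i\le (Lk-s)/h}\big(f_j^{(s)}(\varepsilon_{hi+1},\ldots,\varepsilon_{hi+s})-\mathbf{E}_{H_0}f_j^{(s)}(\varepsilon_1,\ldots,\varepsilon_s)\big)$ and $\mathcal{X}_k^{(N,s,h)}=(\mathcal{X}_k^{(N,s,h)}(0),\ldots,\mathcal{X}_k^{(N,s,h)}(K_{sb}+2))$.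 For $1\le k\le N_{lb}$: $\mathcal{Y}_k^{(N,s,h)}(j)=\sum_{i=1}^{N/N_{lb}}\mathcal{X}^{(N,s,h)}_{\frac{N}{N_{lb}}(k-1)+i}(j)$ and $\mathcal{Y}_k^{(N,s,h)}$ the corresponding vector. *)

theory Defs
  imports "HOL-Probability.Probability"
begin

text \<open>A tuple in X^m is represented as a function on indices 0..m-1
  (extensional, i.e. undefined outside {..<m}).  For a 1-based sequence x
  (x i = eps_i), win x a m is the tuple (x a, ..., x (a+m-1)).\<close>

definition win :: "(nat \<Rightarrow> 'a) \<Rightarrow> nat \<Rightarrow> nat \<Rightarrow> (nat \<Rightarrow> 'a)" where
  "win x a m = restrict (\<lambda>j. x (a + j)) {..<m}"

text \<open>Under H0 the sequence eps_1, eps_2, ... is the coordinate process of the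
  infinite product of copies of P0 (eps_i = omega i; the coordinate 0 is unused).\<close>

definition H0 :: "'a measure \<Rightarrow> (nat \<Rightarrow> 'a) measure" where
  "H0 P0 = PiM UNIV (\<lambda>_. P0)"

definition EH0 :: "'a measure \<Rightarrow> nat \<Rightarrow> ((nat \<Rightarrow> 'a) \<Rightarrow> real) \<Rightarrow> real" where
  "EH0 P0 m f = (\<integral>\<omega>. f (win \<omega> 1 m) \<partial>H0 P0)"

definition sig2H0 :: "'a measure \<Rightarrow> nat \<Rightarrow> ((nat \<Rightarrow> 'a) \<Rightarrow> real) \<Rightarrow> real" where
  "sig2H0 P0 m f =
     (\<integral>\<omega>. (f (win \<omega> 1 m) - EH0 P0 m f)\<^sup>2 \<partial>H0 P0)
     + 2 * (\<Sum>i=2..m. \<integral>\<omega>. (f (win \<omega> i m) - EH0 P0 m f) * (f (win \<omega> 1 m) - EH0 P0 m f) \<partial>H0 P0)"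

definition sigH0 :: "'a measure \<Rightarrow> nat \<Rightarrow> ((nat \<Rightarrow> 'a) \<Rightarrow> real) \<Rightarrow> real" where
  "sigH0 P0 m f = sqrt (sig2H0 P0 m f)"

definition Esb :: "'a measure \<Rightarrow> nat \<Rightarrow> ((nat \<Rightarrow> 'a) \<Rightarrow> real) \<Rightarrow> (nat \<Rightarrow> real set) \<Rightarrow> nat \<Rightarrow> real" where
  "Esb P0 Lsb fsb \<alpha> j = measure (H0 P0) {\<omega> \<in> space (H0 P0). fsb (win \<omega> 1 Lsb) \<in> \<alpha> j}"

definition Tsum :: "'a measure \<Rightarrow> nat \<Rightarrow> ((nat \<Rightarrow> 'a) \<Rightarrow> real) \<Rightarrow> nat \<Rightarrow> (nat \<Rightarrow> 'a) \<Rightarrow> real" where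
  "Tsum P0 msum fsm n x =
     (\<Sum>i=1..n + 1 - msum. fsm (win x i msum) - EH0 P0 msum fsm)
       / (sigH0 P0 msum fsm * sqrt (real (n + 1 - msum)))"

definition Wlb :: "nat \<Rightarrow> nat \<Rightarrow> ((nat \<Rightarrow> 'a) \<Rightarrow> real) \<Rightarrow> nat \<Rightarrow> (nat \<Rightarrow> 'a) \<Rightarrow> nat \<Rightarrow> real" where
  "Wlb Nlb mlb flb n x k =
     (let L = n div Nlb in \<Sum>j = L * (k - 1) + 1 .. L * k + 1 - mlb. flb (win x j mlb))"

definition Tlb :: "'a measure \<Rightarrow> nat \<Rightarrow> nat \<Rightarrow> ((nat \<Rightarrow> 'a) \<Rightarrow> real) \<Rightarrow> nat \<Rightarrow> (nat \<Rightarrow> 'a) \<Rightarrow> real" where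
  "Tlb P0 Nlb mlb flb n x =
     (let L = n div Nlb in
      \<Sum>k=1..Nlb. (Wlb Nlb mlb flb n x k - (real L - real mlb + 1) * EH0 P0 mlb flb)\<^sup>2
                   / (real L * (sigH0 P0 mlb flb)\<^sup>2))"

definition wsb :: "nat \<Rightarrow> ((nat \<Rightarrow> 'a) \<Rightarrow> real) \<Rightarrow> (nat \<Rightarrow> real set) \<Rightarrow> nat \<Rightarrow> (nat \<Rightarrow> 'a) \<Rightarrow> nat \<Rightarrow> real" where
  "wsb Lsb fsb \<alpha> n x j =
     (\<Sum>i=1..n div Lsb. if fsb (win x (Lsb * (i - 1) + 1) Lsb) \<in> \<alpha> j then 1 else 0)"

definition Tsb :: "'a measure \<Rightarrow> nat \<Rightarrow> nat \<Rightarrow> ((nat \<Rightarrow> 'a) \<Rightarrow> real) \<Rightarrow> (nat \<Rightarrow> real set)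
                   \<Rightarrow> nat \<Rightarrow> (nat \<Rightarrow> 'a) \<Rightarrow> real" where
  "Tsb P0 Lsb K fsb \<alpha> n x =
     (let Nsb = n div Lsb in
      \<Sum>j=0..K. (wsb Lsb fsb \<alpha> n x j - real Nsb * Esb P0 Lsb fsb \<alpha> j)\<^sup>2
                 / (real Nsb * Esb P0 Lsb fsb \<alpha> j))"

text \<open>fvec ... h j theta = f^(s)_j(theta) for a tuple theta = (theta_1,...,theta_s),
  represented 0-based: theta_u = theta (u - 1).\<close>

definition fvec :: "'a measure \<Rightarrow> nat \<Rightarrow> ((nat \<Rightarrow> 'a) \<Rightarrow> real) \<Rightarrow> nat \<Rightarrow> ((nat \<Rightarrow> 'a) \<Rightarrow> real)
                    \<Rightarrow> nat \<Rightarrow> nat \<Rightarrow> ((nat \<Rightarrow> 'a) \<Rightarrow> real) \<Rightarrow> (nat \<Rightarrow> real set)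
                    \<Rightarrow> nat \<Rightarrow> nat \<Rightarrow> (nat \<Rightarrow> 'a) \<Rightarrow> real" where
  "fvec P0 msum fsm mlb flb Lsb K fsb \<alpha> h j \<theta> =
     (if j \<le> K then
        (\<Sum>u=1..h div Lsb. if fsb (win \<theta> (Lsb * (u - 1)) Lsb) \<in> \<alpha> j then 1 else 0)
          / sqrt (Esb P0 Lsb fsb \<alpha> j)
      else if j = K + 1 then
        (\<Sum>u=1..h. flb (win \<theta> (u - 1) mlb)) / sigH0 P0 mlb flb
      else if j = K + 2 then
        (\<Sum>u=1..h. fsm (win \<theta> (u - 1) msum)) / sigH0 P0 msum fsm
      else 0)"

text \<open>Xcal ... N s h n x k j = X_k^(N,s,h)(j) computed from the sample x (x i = eps_i):
  the index i runs over the integers with L(k-1)/h <= i <= (Lk - s)/h, L = [n/N];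
  these are nonnegative, and i <= (Lk-s)/h iff h i + s <= L k.\<close>

definition Xcal :: "'a measure \<Rightarrow> nat \<Rightarrow> ((nat \<Rightarrow> 'a) \<Rightarrow> real) \<Rightarrow> nat \<Rightarrow> ((nat \<Rightarrow> 'a) \<Rightarrow> real)
                    \<Rightarrow> nat \<Rightarrow> nat \<Rightarrow> ((nat \<Rightarrow> 'a) \<Rightarrow> real) \<Rightarrow> (nat \<Rightarrow> real set)
                    \<Rightarrow> nat \<Rightarrow> nat \<Rightarrow> nat \<Rightarrow> nat \<Rightarrow> (nat \<Rightarrow> 'a) \<Rightarrow> nat \<Rightarrow> nat \<Rightarrow> real" where
  "Xcal P0 msum fsm mlb flb Lsb K fsb \<alpha> N s h n x k j =
     (let L = n div N;
          F = fvec P0 msum fsm mlb flb Lsb K fsb \<alpha> h j in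
      (1 / sqrt (real n)) *
        (\<Sum>i \<in> {i::nat. L * (k - 1) \<le> h * i \<and> h * i + s \<le> L * k}.
            F (win x (h * i + 1) s) - (\<integral>\<omega>. F (win \<omega> 1 s) \<partial>H0 P0)))"

definition Ycal :: "'a measure \<Rightarrow> nat \<Rightarrow> ((nat \<Rightarrow> 'a) \<Rightarrow> real) \<Rightarrow> nat \<Rightarrow> ((nat \<Rightarrow> 'a) \<Rightarrow> real)
                    \<Rightarrow> nat \<Rightarrow> nat \<Rightarrow> nat \<Rightarrow> ((nat \<Rightarrow> 'a) \<Rightarrow> real) \<Rightarrow> (nat \<Rightarrow> real set)
                    \<Rightarrow> nat \<Rightarrow> nat \<Rightarrow> nat \<Rightarrow> nat \<Rightarrow> (nat \<Rightarrow> 'a) \<Rightarrow> nat \<Rightarrow> nat \<Rightarrow> real" where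
  "Ycal P0 msum fsm mlb flb Nlb Lsb K fsb \<alpha> N s h n x k j =
     (\<Sum>i=1..N div Nlb.
        Xcal P0 msum fsm mlb flb Lsb K fsb \<alpha> N s h n x ((N div Nlb) * (k - 1) + i) j)"

text \<open>Q n is the probability space of the n-th series. oP1 Q Z: Z n = o_P(1).\<close>

definition oP1 :: "(nat \<Rightarrow> 'w measure) \<Rightarrow> (nat \<Rightarrow> 'w \<Rightarrow> real) \<Rightarrow> bool" where
  "oP1 Q Z \<longleftrightarrow>
     (\<forall>e>0. (\<lambda>n. measure (Q n) {\<omega> \<in> space (Q n). e < \<bar>Z n \<omega>\<bar>}) \<longlonglongrightarrow> 0)"

definition conv_distr :: "(nat \<Rightarrow> 'w measure) \<Rightarrow> (nat \<Rightarrow> 'w \<Rightarrow> 'v::topological_space) \<Rightarrow> 'v set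
                          \<Rightarrow> 'r measure \<Rightarrow> ('r \<Rightarrow> 'v) \<Rightarrow> bool" where
  "conv_distr Q V S R W \<longleftrightarrow>
     (\<forall>g :: 'v \<Rightarrow> real. continuous_on S g \<and> bounded (g ` S) \<longrightarrow>
        (\<lambda>n. \<integral>\<omega>. g (V n \<omega>) \<partial>Q n) \<longlonglongrightarrow> (\<integral>r. g (W r) \<partial>R))"

text \<open>A finite family of real coordinates indexed by I, embedded into the product
  space (index type 'i => real, product topology), zero outside I.\<close>

definition vec_on :: "'i set \<Rightarrow> ('i \<Rightarrow> real) \<Rightarrow> ('i \<Rightarrow> real)" where
  "vec_on I v = (\<lambda>i. if i \<in> I then v i else 0)"

definition supp_on :: "'i set \<Rightarrow> ('i \<Rightarrow> real) set" where
  "supp_on I = {v. \<forall>i. i \<notin> I \<longrightarrow> v i = 0}"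

end

(* Each coordinate of the auxiliary vector X_k is n^(-1/2) times a sum of bounded centred summands
   indexed by the "window cells" of the k-th of N blocks of length [n/N]: every window of step h
   contributes h consecutive summands (h / L_sb short blocks for the short-block statistic).
   Over all blocks, or over the N / N_lb blocks forming one long block, these cells exhaust the
   index set of the corresponding statistic up to O(N (s + h)) boundary indices.  Hence,
   deterministically, T_sum differs from the sum of the Y_k(K_sb + 2) by O(n^(-1/2)), and T_lb,
   T_sb differ from the corresponding quadratic forms in the Y_k by O(n^(-1/2) (1 + |Y|^2)); no
   independence is involved, H_0 only fixes the centring and normalising constants.  If the X_k
   converge jointly in distribution, so do the Y_k by continuous mapping, the quadratic forms are
   bounded in probability, the errors are o_P(1), and Slutsky's lemma gives the joint limit of
   (T_sum, T_lb, T_sb). *)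

theory Submission
  imports Defs
begin

section \<open>Window cells\<close>

definition window_starts :: "nat \<Rightarrow> nat \<Rightarrow> nat \<Rightarrow> nat \<Rightarrow> nat set" where
  "window_starts L h s k = {i. L * (k - 1) \<le> h * i \<and> h * i + s \<le> L * k}"

text \<open>With \<open>h = p * h'\<close>, the first \<open>h\<close> positions of window \<open>i\<close> are cut into the \<open>h'\<close> cells
  \<open>t = h' * i + u\<close> (\<open>1 \<le> u \<le> h'\<close>); cell \<open>t\<close> covers the positions \<open>p * (t - 1) + 1, \<dots>, p * t\<close>.
  For the summing and long-block statistics \<open>p = 1\<close>, for the short-block statistic \<open>p = L\<^sub>s\<^sub>b\<close>.\<close>

definition window_cells :: "nat \<Rightarrow> nat \<Rightarrow> nat \<Rightarrow> nat \<Rightarrow> nat \<Rightarrow> nat set" where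
  "window_cells L h s h' k = (\<lambda>(i, u). h' * i + u) ` (window_starts L h s k \<times> {1..h'})"

text \<open>Cells lying well inside block \<open>k\<close> are window cells and form an interval; counting them
  bounds the number of window cells from below.\<close>

definition core_cells :: "nat \<Rightarrow> nat \<Rightarrow> nat \<Rightarrow> nat \<Rightarrow> nat \<Rightarrow> nat set" where
  "core_cells L h s p k = {t. L * (k - 1) + h < p * t \<and> p * t + s \<le> L * k}"

lemma finite_window_starts:
  assumes "h \<ge> 1"
  shows "finite (window_starts L h s k)"
proof (rule finite_subset)
  show "window_starts L h s k \<subseteq> {..L * k}"
  proof
    fix i assume "i \<in> window_starts L h s k"
    then have "h * i \<le> L * k" by (auto simp: window_starts_def)
    moreover have "i \<le> h * i" using assms mult_le_mono1[of 1 h i] by simp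
    ultimately show "i \<in> {..L * k}" by (metis atMost_iff le_trans)
  qed
qed simp

lemma finite_window_cells: "h \<ge> 1 \<Longrightarrow> finite (window_cells L h s h' k)"
  unfolding window_cells_def using finite_window_starts by auto

lemma inj_on_mult_add_segment:
  fixes h' :: nat
  assumes "h' \<ge> 1"
  shows "inj_on (\<lambda>(i, u). h' * i + u) (A \<times> {1..h'})"
proof (rule inj_onI, clarify)
  fix i u i' u'
  assume "u \<in> {1..h'}" "u' \<in> {1..h'}" and e: "h' * i + u = h' * i' + u'"
  then have "h' * i + (u - 1) = h' * i' + (u' - 1)" "u - 1 < h'" "u' - 1 < h'" by auto
  moreover have "(h' * j + r) div h' = j" if "r < h'" for j r using that by simp
  ultimately have "i = i'" by metis
  then show "i = i' \<and> u = u'" using e by simp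
qed

lemma sum_window_cells:
  assumes "h' \<ge> 1" "h \<ge> 1"
  shows "(\<Sum>i\<in>window_starts L h s k. \<Sum>u=1..h'. G (h' * i + u)) = (\<Sum>t\<in>window_cells L h s h' k. G t)"
proof -
  have "(\<Sum>i\<in>window_starts L h s k. \<Sum>u=1..h'. G (h' * i + u))
      = (\<Sum>(i, u)\<in>window_starts L h s k \<times> {1..h'}. G (h' * i + u))"
    by (simp add: sum.cartesian_product)
  also have "\<dots> = (\<Sum>t\<in>window_cells L h s h' k. G t)"
    unfolding window_cells_def
    by (subst sum.reindex[OF inj_on_mult_add_segment[OF assms(1)]]) (simp add: case_prod_beta')
  finally show ?thesis .
qed

lemma window_cells_bounds:
  assumes "h = p * h'" "p \<ge> 1" "t \<in> window_cells L h s h' k"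
  shows "L * (k - 1) < p * t" "p * t + s \<le> L * k + h"
proof -
  obtain i u where t: "t = h' * i + u" and i: "L * (k - 1) \<le> h * i" "h * i + s \<le> L * k"
    and u: "1 \<le> u" "u \<le> h'"
    using assms(3) by (auto simp: window_cells_def window_starts_def)
  have "p * t = h * i + p * u" using t assms(1) by (simp add: algebra_simps)
  moreover have "1 \<le> p * u" "p * u \<le> h" using u assms(1,2) by simp_all
  ultimately show "L * (k - 1) < p * t" "p * t + s \<le> L * k + h" using i by linarith+
qed

lemma core_cells_subset_window_cells:
  assumes "h = p * h'" "h' \<ge> 1" "p \<ge> 1"
  shows "core_cells L h s p k \<subseteq> window_cells L h s h' k"
proof
  fix t assume "t \<in> core_cells L h s p k"
  then have a: "L * (k - 1) + h < p * t" "p * t + s \<le> L * k" by (auto simp: core_cells_def)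
  then have "t \<ge> 1" by (cases t) auto
  define i where "i = (t - 1) div h'"
  define u where "u = (t - 1) mod h' + 1"
  have tu: "h' * i + u = t" unfolding i_def u_def using \<open>t \<ge> 1\<close> by simp
  have u: "1 \<le> u" "u \<le> h'" using assms(2) unfolding u_def by (auto simp: Suc_le_eq)
  have "p * t = h * i + p * u" using tu assms(1) by (metis add_mult_distrib2 mult.assoc)
  moreover have "1 \<le> p * u" "p * u \<le> h" using u assms(1,3) by simp_all
  ultimately have "i \<in> window_starts L h s k" using a by (simp add: window_starts_def)
  then show "t \<in> window_cells L h s h' k" unfolding window_cells_def using u tu by force
qed

lemma window_cells_disjoint:
  assumes "h = p * h'" "p \<ge> 1" "s \<ge> h" "k1 \<ge> 1" "k2 \<ge> 1" "k1 \<noteq> k2"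
  shows "window_cells L h s h' k1 \<inter> window_cells L h s h' k2 = {}"
proof (rule ccontr)
  assume "\<not> ?thesis"
  then obtain t where t1: "t \<in> window_cells L h s h' k1" and t2: "t \<in> window_cells L h s h' k2"
    by blast
  note b1 = window_cells_bounds[OF assms(1,2) t1] and b2 = window_cells_bounds[OF assms(1,2) t2]
  have "k1 \<le> k2 - 1 \<or> k2 \<le> k1 - 1" using assms(4-6) by linarith
  then have "L * k1 \<le> L * (k2 - 1) \<or> L * k2 \<le> L * (k1 - 1)" using mult_le_mono2 by blast
  then show False using b1 b2 assms(3) by linarith
qed

lemma real_div_bounds:
  fixes n d :: nat
  assumes "1 \<le> d"
  shows "real d * real (n div d) \<le> real n" "real n < real d * (real (n div d) + 1)"
proof -
  have "real n = real d * real (n div d) + real (n mod d)"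
    by (metis div_mult_mod_eq mult.commute of_nat_add of_nat_mult)
  moreover have "n mod d < d" using assms by simp
  ultimately show "real d * real (n div d) \<le> real n" "real n < real d * (real (n div d) + 1)"
    by (simp_all add: algebra_simps)
qed

lemma core_cells_eq_interval:
  assumes "p \<ge> 1"
  shows "core_cells L h s p k = {(L * (k - 1) + h) div p + 1 .. (L * k - s) div p}"
proof (intro set_eqI iffI)
  fix t assume "t \<in> core_cells L h s p k"
  then have t: "L * (k - 1) + h < p * t" "p * t \<le> L * k - s" unfolding core_cells_def by auto
  have "p * ((L * (k - 1) + h) div p) \<le> L * (k - 1) + h" by simp
  then have "(L * (k - 1) + h) div p < t" using t(1) assms by (metis le_less_trans mult_less_cancel1)
  moreover have "t \<le> (L * k - s) div p" using t(2) assms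
    by (simp add: less_eq_div_iff_mult_less_eq mult.commute)
  ultimately show "t \<in> {(L * (k - 1) + h) div p + 1 .. (L * k - s) div p}" by simp
next
  fix t assume t: "t \<in> {(L * (k - 1) + h) div p + 1 .. (L * k - s) div p}"
  then have "p * t \<le> L * k - s" using assms by (simp add: less_eq_div_iff_mult_less_eq mult.commute)
  moreover have "(L * (k - 1) + h) div p < t" using t by simp
  then have "L * (k - 1) + h < p * t" using assms by (simp add: div_less_iff_less_mult mult.commute)
  ultimately show "t \<in> core_cells L h s p k" unfolding core_cells_def by auto
qed

lemma card_core_cells_ge:
  assumes "p \<ge> 1" "k \<ge> 1" "L \<ge> s + h"
  shows "real (card (core_cells L h s p k)) \<ge> (real L - real s - real h) / real p - 1"
proof -
  define a where "a = L * (k - 1) + h"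
  define b where "b = L * k - s"
  have "L * k = L * (k - 1) + L" using assms(2) by (cases k) auto
  then have ab: "real b - real a = real L - real s - real h"
    using assms(3) unfolding a_def b_def by (simp add: of_nat_diff)
  have "real (card (core_cells L h s p k)) \<ge> real (b div p) - real (a div p)"
    unfolding core_cells_eq_interval[OF assms(1)] a_def[symmetric] b_def[symmetric] by simp
  moreover have "real (a div p) \<le> real a / real p" "real b / real p - 1 < real (b div p)"
    using real_div_bounds[OF assms(1), of a] real_div_bounds[OF assms(1), of b] assms(1)
    by (simp_all add: field_simps)
  moreover have "(real L - real s - real h) / real p - 1 = real b / real p - 1 - real a / real p"
    by (simp add: ab[symmetric] diff_divide_distrib)
  ultimately show ?thesis by linarith
qed

lemma sum_UN_window_cells:
  assumes "h = p * h'" "p \<ge> 1" "s \<ge> h" "h \<ge> 1" "finite I" "\<And>k. k \<in> I \<Longrightarrow> k \<ge> 1"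
  shows "(\<Sum>k\<in>I. \<Sum>t\<in>window_cells L h s h' k. G t) = (\<Sum>t\<in>(\<Union>k\<in>I. window_cells L h s h' k). G t)"
  by (rule sum.UNION_disjoint[symmetric]) (use assms finite_window_cells window_cells_disjoint in auto)

lemma card_UN_window_cells_ge:
  assumes "h = p * h'" "p \<ge> 1" "s \<ge> h" "h' \<ge> 1" "finite I" "\<And>k. k \<in> I \<Longrightarrow> k \<ge> 1"
    "L \<ge> s + h"
  shows "real (card (\<Union>k\<in>I. window_cells L h s h' k))
           \<ge> real (card I) * ((real L - real s - real h) / real p - 1)"
proof -
  have h1: "h \<ge> 1" using assms(1,2,4) by simp
  note sub = core_cells_subset_window_cells[OF assms(1,4,2)]
  have fin: "finite (core_cells L h s p k)" for k
    using finite_subset[OF sub finite_window_cells[OF h1]] .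
  have "card (\<Union>k\<in>I. core_cells L h s p k) = (\<Sum>k\<in>I. card (core_cells L h s p k))"
    by (rule card_UN_disjoint[OF assms(5)])
      (use fin window_cells_disjoint[OF assms(1,2,3)] assms(6) sub in blast)+
  then have "real (card (\<Union>k\<in>I. core_cells L h s p k)) = (\<Sum>k\<in>I. real (card (core_cells L h s p k)))"
    by simp
  also have "\<dots> \<ge> (\<Sum>k\<in>I. (real L - real s - real h) / real p - 1)"
    by (rule sum_mono) (use card_core_cells_ge[OF assms(2) _ assms(7)] assms(6) in auto)
  finally have "real (card (\<Union>k\<in>I. core_cells L h s p k)) \<ge> real (card I) * ((real L - real s - real h) / real p - 1)"
    by simp
  moreover have "card (\<Union>k\<in>I. core_cells L h s p k) \<le> card (\<Union>k\<in>I. window_cells L h s h' k)"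
  proof (rule card_mono)
    show "finite (\<Union>k\<in>I. window_cells L h s h' k)" using assms(5) finite_window_cells[OF h1] by blast
    show "(\<Union>k\<in>I. core_cells L h s p k) \<subseteq> (\<Union>k\<in>I. window_cells L h s h' k)"
      using sub by (meson UN_mono order_refl)
  qed
  ultimately show ?thesis by linarith
qed

lemma sum_consecutive_blocks:
  fixes f :: "nat \<Rightarrow> 'b::comm_monoid_add"
  shows "(\<Sum>k=1..m. \<Sum>i=1..q. f (q * (k - 1) + i)) = (\<Sum>t=1..q * m. f t)"
proof (induction m)
  case (Suc m)
  have "(\<Sum>t=1..q * Suc m. f t) = (\<Sum>t=1..q * m. f t) + (\<Sum>t=q * m + 1..q * m + q. f t)"
    by (subst sum.ub_add_nat[symmetric]) (simp_all add: algebra_simps)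
  also have "(\<Sum>t=q * m + 1..q * m + q. f t) = (\<Sum>i=1..q. f (q * m + i))"
    using sum.shift_bounds_cl_nat_ivl[of f 1 "q * m" q] by (simp add: add.commute)
  finally show ?case using Suc by simp
qed simp

lemma abs_sum_diff_le_complements:
  fixes G :: "nat \<Rightarrow> real"
  assumes "finite Out" "S \<subseteq> Out" "T \<subseteq> Out" "\<And>t. t \<in> Out \<Longrightarrow> \<bar>G t\<bar> \<le> B"
  shows "\<bar>sum G S - sum G T\<bar>
           \<le> B * (real (card Out) - real (card S)) + B * (real (card Out) - real (card T))"
proof -
  have rest: "\<bar>sum G (Out - A)\<bar> \<le> B * (real (card Out) - real (card A))"
    and split: "sum G Out = sum G A + sum G (Out - A)" if "A \<subseteq> Out" for A
  proof -
    have "\<bar>sum G (Out - A)\<bar> \<le> (\<Sum>t\<in>Out - A. \<bar>G t\<bar>)" by (rule sum_abs)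
    also have "\<dots> \<le> real (card (Out - A)) * B" by (rule sum_bounded_above) (use assms(4) in auto)
    finally have "\<bar>sum G (Out - A)\<bar> \<le> real (card (Out - A)) * B" .
    moreover have "real (card (Out - A)) = real (card Out) - real (card A)"
      using card_Diff_subset[OF finite_subset[OF that assms(1)] that] card_mono[OF assms(1) that]
      by (simp add: of_nat_diff)
    ultimately show "\<bar>sum G (Out - A)\<bar> \<le> B * (real (card Out) - real (card A))"
      by (simp add: mult.commute)
    show "sum G Out = sum G A + sum G (Out - A)"
      using sum.subset_diff[OF that assms(1), of G] by linarith
  qed
  show ?thesis using rest[OF assms(2)] rest[OF assms(3)] split[OF assms(2)] split[OF assms(3)]
    by linarith
qed

lemma inverse_sqrt_diff_bounds:
  fixes a n :: real
  assumes "1 \<le> a" "a \<le> n" "n \<le> 2 * a"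
  shows "0 \<le> 1 / sqrt a - 1 / sqrt n" "1 / sqrt a - 1 / sqrt n \<le> 2 * (n - a) / (n * sqrt n)"
proof -
  have sa: "sqrt a > 0" "sqrt n > 0" using assms by auto
  show "0 \<le> 1 / sqrt a - 1 / sqrt n" using assms sa by (simp add: frac_le)
  have "1 / sqrt a - 1 / sqrt n = (sqrt n - sqrt a) / (sqrt a * sqrt n)"
    using sa by (simp add: field_simps)
  also have "sqrt n - sqrt a = (n - a) / (sqrt n + sqrt a)"
  proof -
    have "(sqrt n - sqrt a) * (sqrt n + sqrt a) = n - a"
      using assms by (simp add: algebra_simps)
    moreover have "sqrt n + sqrt a > 0" using sa by linarith
    ultimately show ?thesis by (simp add: eq_divide_eq)
  qed
  finally have e: "1 / sqrt a - 1 / sqrt n = (n - a) / ((sqrt n + sqrt a) * (sqrt a * sqrt n))"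
    by simp
  have "sqrt n \<le> sqrt (4 * a)" using assms by simp
  then have "sqrt n \<le> 2 * sqrt a" by (simp add: real_sqrt_mult)
  then have "(sqrt n + sqrt a) * (sqrt a * sqrt n) \<ge> sqrt n * (sqrt n / 2 * sqrt n)"
    using sa by (intro mult_mono) auto
  moreover have "sqrt n * (sqrt n / 2 * sqrt n) = n * sqrt n / 2"
    using assms by (simp add: field_simps)
  ultimately have d: "(sqrt n + sqrt a) * (sqrt a * sqrt n) \<ge> n * sqrt n / 2" by linarith
  have "(n - a) / ((sqrt n + sqrt a) * (sqrt a * sqrt n)) \<le> (n - a) / (n * sqrt n / 2)"
    using assms sa d by (intro divide_left_mono) (auto intro!: mult_pos_pos add_pos_pos)
  also have "\<dots> = 2 * (n - a) / (n * sqrt n)" by (simp add: field_simps)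
  finally show "1 / sqrt a - 1 / sqrt n \<le> 2 * (n - a) / (n * sqrt n)"
    unfolding e .
qed

lemma normalized_sums_diff_bound:
  fixes A S a n B D \<sigma> :: real
  assumes "\<sigma> > 0" "1 \<le> a" "a \<le> n" "n \<le> 2 * a" "\<bar>A\<bar> \<le> B * n" "\<bar>A - S\<bar> \<le> D"
  shows "\<bar>A / (\<sigma> * sqrt a) - S / (\<sigma> * sqrt n)\<bar> \<le> (2 * B * (n - a) + D) / (\<sigma> * sqrt n)"
proof -
  note sl = inverse_sqrt_diff_bounds[OF assms(2-4)]
  have sa: "sqrt a > 0" "sqrt n > 0" using assms by auto
  have "\<bar>A * (1 / sqrt a - 1 / sqrt n)\<bar> = \<bar>A\<bar> * (1 / sqrt a - 1 / sqrt n)"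
    using sl by (simp add: abs_mult)
  also have "\<dots> \<le> (B * n) * (2 * (n - a) / (n * sqrt n))"
    using sl assms(5) by (intro mult_mono) auto
  also have "\<dots> = 2 * B * (n - a) / sqrt n" using assms by (simp add: field_simps)
  finally have t1: "\<bar>A * (1 / sqrt a - 1 / sqrt n)\<bar> \<le> 2 * B * (n - a) / sqrt n" .
  have t2: "\<bar>(A - S) / sqrt n\<bar> \<le> D / sqrt n"
    using assms(6) sa by (simp add: divide_right_mono)
  have "A / sqrt a - S / sqrt n = A * (1 / sqrt a - 1 / sqrt n) + (A - S) / sqrt n"
    by (simp add: algebra_simps diff_divide_distrib)
  then have "\<bar>A / sqrt a - S / sqrt n\<bar> \<le> (2 * B * (n - a) + D) / sqrt n"
    using t1 t2 abs_triangle_ineq[of "A * (1 / sqrt a - 1 / sqrt n)" "(A - S) / sqrt n"]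
    by (simp add: add_divide_distrib)
  then have "\<bar>A / sqrt a - S / sqrt n\<bar> / \<sigma> \<le> (2 * B * (n - a) + D) / sqrt n / \<sigma>"
    using assms(1) by (intro divide_right_mono) auto
  moreover have "\<bar>A / sqrt a - S / sqrt n\<bar> / \<sigma> = \<bar>A / (\<sigma> * sqrt a) - S / (\<sigma> * sqrt n)\<bar>"
    using assms(1) sa by (simp add: field_simps)
  ultimately show ?thesis by (simp add: mult.commute)
qed

lemma le_one_plus_square_div_sqrt:
  fixes b n :: real
  assumes "1 \<le> n"
  shows "1 / n \<le> 1 / sqrt n" "1 / n \<le> (1 + b\<^sup>2 / n) / sqrt n" "\<bar>b\<bar> / n \<le> (1 + b\<^sup>2 / n) / sqrt n"
proof -
  have sn: "sqrt n > 0" "sqrt n * sqrt n = n" using assms by auto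
  have "sqrt n * 1 \<le> sqrt n * sqrt n" using sn assms by (intro mult_left_mono) auto
  then show i: "1 / n \<le> 1 / sqrt n" using sn by (intro divide_left_mono) auto
  moreover have "1 / sqrt n \<le> (1 + b\<^sup>2 / n) / sqrt n" using sn assms by (intro divide_right_mono) auto
  ultimately show "1 / n \<le> (1 + b\<^sup>2 / n) / sqrt n" by linarith
  have "\<bar>b\<bar> / sqrt n \<le> 1 + (\<bar>b\<bar> / sqrt n)\<^sup>2"
    using sum_power2_ge_zero[of "\<bar>b\<bar> / sqrt n - 1/2" 0] by (simp add: power2_eq_square algebra_simps)
  then have "\<bar>b\<bar> / sqrt n \<le> 1 + b\<^sup>2 / n" using sn by (simp add: power_divide)
  then show "\<bar>b\<bar> / n \<le> (1 + b\<^sup>2 / n) / sqrt n"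
    using sn by (metis divide_divide_eq_left divide_right_mono less_eq_real_def)
qed

lemma square_ratio_approx:
  fixes a b D c M n :: real
  assumes "0 \<le> D" "1 \<le> c" "1 \<le> n" "0 < M" "n \<le> 2 * c * M" "\<bar>n - c * M\<bar> \<le> c" "\<bar>a - b\<bar> \<le> D"
  shows "\<bar>a\<^sup>2 / M - c * b\<^sup>2 / n\<bar> \<le> (4 * c * D + 2 * c * D\<^sup>2 + 2 * c\<^sup>2) * (1 + b\<^sup>2 / n) / sqrt n"
proof -
  note i1 = le_one_plus_square_div_sqrt(1)[OF assms(3)]
    and dn = le_one_plus_square_div_sqrt(2)[OF assms(3), of b]
    and bn = le_one_plus_square_div_sqrt(3)[OF assms(3), of b]
  have iM: "1 / M \<le> 2 * c / n"
    using assms by (simp add: field_simps)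
  have Q: "0 \<le> b\<^sup>2 / n" using assms by simp
  have "\<bar>a\<^sup>2 - b\<^sup>2\<bar> = \<bar>a - b\<bar> * \<bar>a + b\<bar>"
    by (simp add: power2_eq_square algebra_simps flip: abs_mult)
  also have "\<dots> \<le> D * (2 * \<bar>b\<bar> + D)" using assms(7) by (intro mult_mono) auto
  finally have ab: "\<bar>a\<^sup>2 - b\<^sup>2\<bar> \<le> D * (2 * \<bar>b\<bar> + D)" .
  have "\<bar>(a\<^sup>2 - b\<^sup>2) / M\<bar> = \<bar>a\<^sup>2 - b\<^sup>2\<bar> * (1 / M)" using assms(4) by simp
  also have "\<dots> \<le> D * (2 * \<bar>b\<bar> + D) * (2 * c / n)"
    using ab iM assms by (intro mult_mono) auto
  also have "\<dots> = 4 * c * D * (\<bar>b\<bar> / n) + 2 * c * D\<^sup>2 * (1 / n)"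
    by (simp add: algebra_simps power2_eq_square)
  also have "\<dots> \<le> (4 * c * D + 2 * c * D\<^sup>2) * ((1 + b\<^sup>2 / n) / sqrt n)"
    using bn dn assms unfolding distrib_right by (intro add_mono mult_left_mono) auto
  finally have t1: "\<bar>(a\<^sup>2 - b\<^sup>2) / M\<bar> \<le> (4 * c * D + 2 * c * D\<^sup>2) * ((1 + b\<^sup>2 / n) / sqrt n)" .
  have "b\<^sup>2 / M - c * b\<^sup>2 / n = (b\<^sup>2 / n) * ((n - c * M) * (1 / M))"
    using assms(3,4) by (simp add: field_simps)
  then have "\<bar>b\<^sup>2 / M - c * b\<^sup>2 / n\<bar> = (b\<^sup>2 / n) * (\<bar>n - c * M\<bar> * (1 / M))"
    using Q assms(3,4) by (simp add: abs_mult)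
  also have "\<dots> \<le> (b\<^sup>2 / n) * (c * (2 * c / n))"
    using Q assms iM by (intro mult_left_mono mult_mono) auto
  also have "\<dots> = 2 * c\<^sup>2 * ((b\<^sup>2 / n) * (1 / n))" by (simp add: algebra_simps power2_eq_square)
  also have "\<dots> \<le> 2 * c\<^sup>2 * ((1 + b\<^sup>2 / n) * (1 / sqrt n))"
    using Q i1 assms(3) by (intro mult_left_mono mult_mono) auto
  finally have t2: "\<bar>b\<^sup>2 / M - c * b\<^sup>2 / n\<bar> \<le> 2 * c\<^sup>2 * ((1 + b\<^sup>2 / n) / sqrt n)" by simp
  have "a\<^sup>2 / M - c * b\<^sup>2 / n = (a\<^sup>2 - b\<^sup>2) / M + (b\<^sup>2 / M - c * b\<^sup>2 / n)"
    by (simp add: diff_divide_distrib)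
  then have "\<bar>a\<^sup>2 / M - c * b\<^sup>2 / n\<bar> \<le> (4 * c * D + 2 * c * D\<^sup>2) * ((1 + b\<^sup>2 / n) / sqrt n)
      + 2 * c\<^sup>2 * ((1 + b\<^sup>2 / n) / sqrt n)"
    using t1 t2 by linarith
  also have "\<dots> = (4 * c * D + 2 * c * D\<^sup>2 + 2 * c\<^sup>2) * ((1 + b\<^sup>2 / n) / sqrt n)"
    by (rule distrib_right[symmetric])
  finally show ?thesis by simp
qed

lemma square_div_count_approx:
  fixes a b D :: real and d n :: nat
  assumes "1 \<le> d" "d \<le> n" "0 \<le> D" "\<bar>a - b\<bar> \<le> D"
  shows "\<bar>a\<^sup>2 / real (n div d) - real d * b\<^sup>2 / real n\<bar>
           \<le> (4 * real d * D + 2 * real d * D\<^sup>2 + 2 * (real d)\<^sup>2) * (1 + b\<^sup>2 / real n) / sqrt (real n)"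
proof (rule square_ratio_approx[OF assms(3) _ _ _ _ _ assms(4)])
  note r = real_div_bounds[OF assms(1), of n]
  have q: "n div d \<ge> 1" using assms div_greater_zero_iff[of n d] by simp
  then show "0 < real (n div d)" by simp
  have "real d \<le> real d * real (n div d)"
    using q mult_left_mono[of 1 "real (n div d)" "real d"] by simp
  moreover have "real n < real d * real (n div d) + real d" using r(2) by (simp add: algebra_simps)
  ultimately show "real n \<le> 2 * real d * real (n div d)" by linarith
  show "\<bar>real n - real d * real (n div d)\<bar> \<le> real d" using r by (simp add: algebra_simps)
qed (use assms in auto)

lemma abs_le_div_sqrt_mono:
  fixes d C A A' :: real and n :: nat
  assumes "\<bar>d\<bar> \<le> C * A / sqrt (real n)" "0 \<le> C" "A \<le> A'"
  shows "\<bar>d\<bar> \<le> C * A' / sqrt (real n)"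
  by (rule order_trans[OF assms(1) divide_right_mono[OF mult_left_mono[OF assms(3,2)]]]) simp

lemma tendsto_const_divide_sqrt: "(\<lambda>n. C / sqrt (real n)) \<longlonglongrightarrow> 0"
  by (rule real_tendsto_divide_at_top[OF tendsto_const])
    (rule filterlim_compose[OF sqrt_at_top filterlim_real_sequentially])

lemma dist_triple_le:
  fixes a b c a' b' c' :: real
  shows "dist (a, b, c) (a', b', c') \<le> \<bar>a - a'\<bar> + \<bar>b - b'\<bar> + \<bar>c - c'\<bar>"
proof -
  have "dist (b, c) (b', c') \<le> \<bar>b - b'\<bar> + \<bar>c - c'\<bar>"
    unfolding dist_Pair_Pair using sqrt_sum_squares_le_sum_abs[of "dist b b'" "dist c c'"]
    by (simp add: dist_real_def)
  moreover have "dist (a, b, c) (a', b', c') \<le> \<bar>a - a'\<bar> + dist (b, c) (b', c')"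
    unfolding dist_Pair_Pair[of a "(b, c)"]
    using sqrt_sum_squares_le_sum_abs[of "dist a a'" "dist (b, c) (b', c')"] by (simp add: dist_real_def)
  ultimately show ?thesis by linarith
qed

lemma abs_diff_le_dist_triple:
  fixes a b c a' b' c' :: real
  shows "\<bar>b - b'\<bar> \<le> dist (a, b, c) (a', b', c')" "\<bar>c - c'\<bar> \<le> dist (a, b, c) (a', b', c')"
  using dist_snd_le[of "(a, b, c)" "(a', b', c')"] dist_fst_le[of "(b, c)" "(b', c')"]
    dist_snd_le[of "(b, c)" "(b', c')"]
  by (simp_all add: dist_real_def)

section \<open>Stochastic order symbols and convergence in distribution\<close>

definition OP1 :: "(nat \<Rightarrow> 'w measure) \<Rightarrow> (nat \<Rightarrow> 'w \<Rightarrow> real) \<Rightarrow> bool" where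
  "OP1 Q U \<longleftrightarrow>
     (\<forall>\<epsilon>>0. \<exists>M. eventually (\<lambda>n. measure (Q n) {\<omega> \<in> space (Q n). M < \<bar>U n \<omega>\<bar>} \<le> \<epsilon>) sequentially)"

lemma oP1_of_bound:
  assumes "\<forall>n\<ge>n0. \<forall>\<omega>\<in>space (Q n). \<bar>Z n \<omega>\<bar> \<le> c n" and "c \<longlonglongrightarrow> 0"
  shows "oP1 Q Z"
  unfolding oP1_def
proof (intro allI impI)
  fix e :: real assume "e > 0"
  with assms(2) have "eventually (\<lambda>n. c n < e \<and> n \<ge> n0) sequentially"
    by (intro eventually_conj order_tendstoD(2) eventually_ge_at_top)
  then have "eventually (\<lambda>n. measure (Q n) {\<omega> \<in> space (Q n). e < \<bar>Z n \<omega>\<bar>} = 0) sequentially"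
  proof eventually_elim
    case (elim n)
    then have "{\<omega> \<in> space (Q n). e < \<bar>Z n \<omega>\<bar>} = {}" using assms(1) by force
    then show ?case by (metis measure_empty)
  qed
  then show "(\<lambda>n. measure (Q n) {\<omega> \<in> space (Q n). e < \<bar>Z n \<omega>\<bar>}) \<longlonglongrightarrow> 0"
    by (rule tendsto_eventually)
qed

lemma oP1_of_OP1_bound:
  assumes Q: "\<And>n. prob_space (Q n)"
    and bound: "\<forall>n\<ge>n0. \<forall>\<omega>\<in>space (Q n). \<bar>Z n \<omega>\<bar> \<le> c n * (1 + \<bar>U n \<omega>\<bar>)"
    and c: "c \<longlonglongrightarrow> 0" "\<And>n. c n \<ge> 0"
    and U: "OP1 Q U" "\<And>n. U n \<in> borel_measurable (Q n)"
  shows "oP1 Q Z"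
  unfolding oP1_def
proof (intro allI impI)
  fix e :: real assume e: "e > 0"
  show "(\<lambda>n. measure (Q n) {\<omega> \<in> space (Q n). e < \<bar>Z n \<omega>\<bar>}) \<longlonglongrightarrow> 0"
    unfolding tendsto_iff
  proof (intro allI impI)
    fix \<epsilon> :: real assume \<epsilon>: "\<epsilon> > 0"
    obtain M where M: "eventually (\<lambda>n. measure (Q n) {\<omega> \<in> space (Q n). M < \<bar>U n \<omega>\<bar>} \<le> \<epsilon> / 2) sequentially"
      using U(1) \<epsilon> unfolding OP1_def by (meson half_gt_zero)
    have "(\<lambda>n. c n * (1 + \<bar>M\<bar>)) \<longlonglongrightarrow> 0 * (1 + \<bar>M\<bar>)" by (intro tendsto_mult c tendsto_const)
    with e have "eventually (\<lambda>n. c n * (1 + \<bar>M\<bar>) < e \<and> n \<ge> n0) sequentially"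
      by (intro eventually_conj order_tendstoD(2) eventually_ge_at_top) auto
    with M show "eventually (\<lambda>n. dist (measure (Q n) {\<omega> \<in> space (Q n). e < \<bar>Z n \<omega>\<bar>}) 0 < \<epsilon>) sequentially"
    proof eventually_elim
      case (elim n)
      interpret prob_space "Q n" by (rule Q)
      have "{\<omega> \<in> space (Q n). e < \<bar>Z n \<omega>\<bar>} \<subseteq> {\<omega> \<in> space (Q n). M < \<bar>U n \<omega>\<bar>}"
      proof safe
        fix \<omega> assume \<omega>: "\<omega> \<in> space (Q n)" "e < \<bar>Z n \<omega>\<bar>"
        show "M < \<bar>U n \<omega>\<bar>"
        proof (rule ccontr)
          assume "\<not> M < \<bar>U n \<omega>\<bar>"
          then have "c n * (1 + \<bar>U n \<omega>\<bar>) \<le> c n * (1 + \<bar>M\<bar>)" using c(2) by (intro mult_left_mono) auto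
          then show False using bound elim \<omega> by force
        qed
      qed
      moreover have "{\<omega> \<in> space (Q n). M < \<bar>U n \<omega>\<bar>} \<in> sets (Q n)" using U(2)[of n] by measurable
      ultimately have "measure (Q n) {\<omega> \<in> space (Q n). e < \<bar>Z n \<omega>\<bar>} \<le> measure (Q n) {\<omega> \<in> space (Q n). M < \<bar>U n \<omega>\<bar>}"
        by (rule finite_measure_mono)
      then show ?case using elim \<epsilon> by simp
    qed
  qed
qed

lemma conv_distr_continuous_map:
  assumes "conv_distr Q V S R W" "continuous_on S \<Psi>" "\<Psi> ` S \<subseteq> S'"
  shows "conv_distr Q (\<lambda>n \<omega>. \<Psi> (V n \<omega>)) S' R (\<lambda>r. \<Psi> (W r))"
  unfolding conv_distr_def
proof (intro allI impI)
  fix g :: "_ \<Rightarrow> real" assume g: "continuous_on S' g \<and> bounded (g ` S')"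
  have "continuous_on S (\<lambda>v. g (\<Psi> v))"
    using continuous_on_compose2[OF _ assms(2,3)] g by blast
  moreover have "bounded ((\<lambda>v. g (\<Psi> v)) ` S)"
    using g assms(3) by (rule_tac bounded_subset[of "g ` S'"]) auto
  ultimately show "(\<lambda>n. \<integral>\<omega>. g (\<Psi> (V n \<omega>)) \<partial>Q n) \<longlonglongrightarrow> (\<integral>r. g (\<Psi> (W r)) \<partial>R)"
    using assms(1) unfolding conv_distr_def by blast
qed

lemma (in prob_space) prob_le_integral_ramp:
  fixes f :: "'a \<Rightarrow> real"
  assumes "f \<in> borel_measurable M"
  shows "prob {x \<in> space M. r + 1 < \<bar>f x\<bar>} \<le> (\<integral>x. min 1 (max 0 (\<bar>f x\<bar> - r)) \<partial>M)"
proof -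
  define A where "A = {x \<in> space M. r + 1 < \<bar>f x\<bar>}"
  have A: "A \<in> sets M" unfolding A_def using assms by measurable
  have "prob A = (\<integral>x. indicator A x \<partial>M)"
    using A by (simp add: Int_absorb2 sets.sets_into_space)
  also have "\<dots> \<le> (\<integral>x. min 1 (max 0 (\<bar>f x\<bar> - r)) \<partial>M)"
  proof (rule integral_mono)
    show "integrable M (indicator A :: _ \<Rightarrow> real)"
      by (rule integrable_const_bound[where B=1]) (use A in auto)
    show "integrable M (\<lambda>x. min 1 (max 0 (\<bar>f x\<bar> - r)))"
      by (rule integrable_const_bound[where B=1]) (use assms in auto)
    show "indicator A x \<le> min 1 (max 0 (\<bar>f x\<bar> - r))" for x
      by (auto simp: A_def indicator_def)
  qed
  finally show ?thesis unfolding A_def .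
qed

lemma OP1_of_conv_distr:
  fixes \<Psi> :: "'v::topological_space \<Rightarrow> real"
  assumes Q: "\<And>n. prob_space (Q n)" and R: "prob_space R"
    and conv: "conv_distr Q V S R W" and cont: "continuous_on S \<Psi>"
    and mV: "\<And>n. (\<lambda>\<omega>. \<Psi> (V n \<omega>)) \<in> borel_measurable (Q n)"
    and mW: "(\<lambda>r. \<Psi> (W r)) \<in> borel_measurable R"
  shows "OP1 Q (\<lambda>n \<omega>. \<Psi> (V n \<omega>))"
  unfolding OP1_def
proof (intro allI impI)
  fix \<epsilon> :: real assume \<epsilon>: "\<epsilon> > 0"
  define g where "g r v = min 1 (max 0 (\<bar>\<Psi> v\<bar> - r))" for r :: real and v
  have g01: "0 \<le> g r v" "g r v \<le> 1" for r v unfolding g_def by auto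
  have "continuous_on S (g r)" for r unfolding g_def by (intro continuous_intros cont)
  moreover have "bounded (g r ` S)" for r unfolding bounded_iff using g01 by (intro exI[of _ 1]) auto
  ultimately have gconv: "(\<lambda>n. \<integral>\<omega>. g r (V n \<omega>) \<partial>Q n) \<longlonglongrightarrow> (\<integral>x. g r (W x) \<partial>R)" for r
    using conv unfolding conv_distr_def by blast
  have "(\<lambda>m. \<integral>x. g (real m) (W x) \<partial>R) \<longlonglongrightarrow> (\<integral>x. 0 \<partial>R)"
  proof (rule integral_dominated_convergence[where w="\<lambda>_. 1"])
    show "(\<lambda>x. g (real m) (W x)) \<in> borel_measurable R" for m unfolding g_def using mW by measurable
    show "integrable R (\<lambda>_. 1::real)"
      using R by (simp add: prob_space.finite_measure finite_measure.integrable_const)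
    show "AE x in R. (\<lambda>m. g (real m) (W x)) \<longlonglongrightarrow> 0"
    proof (rule AE_I2)
      fix x
      have "eventually (\<lambda>m. real m \<ge> \<bar>\<Psi> (W x)\<bar>) sequentially"
        by (rule eventually_sequentiallyI[of "nat \<lceil>\<bar>\<Psi> (W x)\<bar>\<rceil>"]) linarith
      then have "eventually (\<lambda>m. g (real m) (W x) = 0) sequentially"
        by eventually_elim (auto simp: g_def)
      then show "(\<lambda>m. g (real m) (W x)) \<longlonglongrightarrow> 0" by (rule tendsto_eventually)
    qed
  qed (use g01 in auto)
  then have "eventually (\<lambda>m. (\<integral>x. g (real m) (W x) \<partial>R) < \<epsilon>) sequentially"
    using \<epsilon> by (intro order_tendstoD) auto
  then obtain m where "(\<integral>x. g (real m) (W x) \<partial>R) < \<epsilon>"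
    using eventually_sequentially by (meson order_refl)
  with gconv have "eventually (\<lambda>n. (\<integral>\<omega>. g (real m) (V n \<omega>) \<partial>Q n) < \<epsilon>) sequentially"
    by (rule order_tendstoD)
  then have "eventually (\<lambda>n. measure (Q n) {\<omega> \<in> space (Q n). real m + 1 < \<bar>\<Psi> (V n \<omega>)\<bar>} \<le> \<epsilon>) sequentially"
  proof eventually_elim
    case (elim n)
    have "measure (Q n) {\<omega> \<in> space (Q n). real m + 1 < \<bar>\<Psi> (V n \<omega>)\<bar>} \<le> (\<integral>\<omega>. g (real m) (V n \<omega>) \<partial>Q n)"
      unfolding g_def by (rule prob_space.prob_le_integral_ramp[OF Q mV])
    with elim show ?case by linarith
  qed
  then show "\<exists>M. eventually (\<lambda>n. measure (Q n) {\<omega> \<in> space (Q n). M < \<bar>\<Psi> (V n \<omega>)\<bar>} \<le> \<epsilon>) sequentially"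
    by (rule exI)
qed

lemma (in prob_space) abs_integral_diff_le:
  fixes f g :: "'a \<Rightarrow> real"
  assumes "f \<in> borel_measurable M" "g \<in> borel_measurable M"
    and bound: "\<And>x. \<bar>f x\<bar> \<le> B" "\<And>x. \<bar>g x\<bar> \<le> B"
    and A: "A \<in> sets M" and close: "\<And>x. x \<in> space M \<Longrightarrow> x \<notin> A \<Longrightarrow> \<bar>f x - g x\<bar> \<le> e"
    and "0 \<le> e"
  shows "\<bar>(\<integral>x. f x \<partial>M) - (\<integral>x. g x \<partial>M)\<bar> \<le> e + 2 * B * prob A"
proof -
  have B: "0 \<le> B" using bound(1)[of undefined] by linarith
  have int: "integrable M f" "integrable M g" "integrable M (indicator A :: _ \<Rightarrow> real)"
    using integrable_const_bound[of f B] integrable_const_bound[of g B]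
      integrable_const_bound[of "indicator A :: _ \<Rightarrow> real" 1] assms(1,2) bound A
    by auto
  have "\<bar>(\<integral>x. f x \<partial>M) - (\<integral>x. g x \<partial>M)\<bar> \<le> (\<integral>x. \<bar>f x - g x\<bar> \<partial>M)"
    using int integral_abs_bound[of M "\<lambda>x. f x - g x"] by simp
  also have "\<dots> \<le> (\<integral>x. e + 2 * B * indicator A x \<partial>M)"
  proof (rule integral_mono')
    show "\<bar>f x - g x\<bar> \<le> e + 2 * B * indicator A x" if "x \<in> space M" for x
    proof (cases "x \<in> A")
      case True
      then show ?thesis using bound[of x] abs_triangle_ineq4[of "f x" "g x"] \<open>0 \<le> e\<close> by simp
    next
      case False
      then show ?thesis using close[OF that] by simp
    qed
    show "integrable M (\<lambda>x. e + 2 * B * indicator A x)" using int by simp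
    show "0 \<le> e + 2 * B * indicator A x" for x using B \<open>0 \<le> e\<close> by simp
  qed
  also have "\<dots> = e + 2 * B * prob A"
    using int A by (simp add: prob_space Int_absorb2 sets.sets_into_space)
  finally show ?thesis .
qed

lemma (in prob_space) abs_integral_diff_le_tails:
  fixes g :: "'b::euclidean_space \<Rightarrow> real" and T V :: "'a \<Rightarrow> 'b"
  assumes mT: "T \<in> borel_measurable M" and mV: "V \<in> borel_measurable M"
    and g: "g \<in> borel_measurable borel" "\<And>y. \<bar>g y\<bar> \<le> B"
    and uc: "\<And>x y. norm x \<le> \<bar>r\<bar> + 1 \<Longrightarrow> norm y \<le> \<bar>r\<bar> + 1 \<Longrightarrow> dist y x < \<delta> \<Longrightarrow> \<bar>g y - g x\<bar> \<le> \<epsilon>"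
    and e: "0 < e" "e \<le> 1" "e < \<delta>" and "0 \<le> \<epsilon>"
  shows "\<bar>(\<integral>x. g (T x) \<partial>M) - (\<integral>x. g (V x) \<partial>M)\<bar>
    \<le> \<epsilon> + 2 * B * (prob {x \<in> space M. r < \<bar>norm (V x)\<bar>} + prob {x \<in> space M. e < \<bar>dist (T x) (V x)\<bar>})"
proof -
  define A where "A = {x \<in> space M. r < \<bar>norm (V x)\<bar>}"
  define D where "D = {x \<in> space M. e < \<bar>dist (T x) (V x)\<bar>}"
  have AD: "A \<in> sets M" "D \<in> sets M" unfolding A_def D_def using mV mT by measurable
  have B: "0 \<le> B" using g(2)[of 0] by linarith
  have "\<bar>g (T x) - g (V x)\<bar> \<le> \<epsilon>" if "x \<in> space M" "x \<notin> A \<union> D" for x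
  proof (rule uc)
    have V: "norm (V x) \<le> \<bar>r\<bar>" and d: "dist (T x) (V x) \<le> e"
      using that unfolding A_def D_def by auto
    then show "norm (V x) \<le> \<bar>r\<bar> + 1" by simp
    have "norm (T x) \<le> norm (V x) + dist (T x) (V x)"
      by (metis dist_norm norm_triangle_sub add.commute)
    then show "norm (T x) \<le> \<bar>r\<bar> + 1" using V d e(2) by linarith
    show "dist (T x) (V x) < \<delta>" using d e(3) by linarith
  qed
  then have "\<bar>(\<integral>x. g (T x) \<partial>M) - (\<integral>x. g (V x) \<partial>M)\<bar> \<le> \<epsilon> + 2 * B * prob (A \<union> D)"
    using AD \<open>0 \<le> \<epsilon>\<close> by (intro abs_integral_diff_le g measurable_compose[OF mT g(1)] measurable_compose[OF mV g(1)]) auto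
  also have "\<dots> \<le> \<epsilon> + 2 * B * (prob A + prob D)"
    using measure_Un_le[OF AD] B by (intro add_left_mono mult_left_mono) auto
  finally show ?thesis unfolding A_def D_def .
qed

text \<open>Slutsky's lemma.  Tightness of \<open>V\<close> is what allows the test function to be replaced by a
  uniformly continuous one on a large ball.\<close>

lemma conv_distr_of_oP1_dist:
  fixes V T :: "nat \<Rightarrow> 'w \<Rightarrow> 'b::euclidean_space"
  assumes Q: "\<And>n. prob_space (Q n)"
    and conv: "conv_distr Q V UNIV R W"
    and tight: "OP1 Q (\<lambda>n \<omega>. norm (V n \<omega>))"
    and close: "oP1 Q (\<lambda>n \<omega>. dist (T n \<omega>) (V n \<omega>))"
    and mV: "\<And>n. V n \<in> borel_measurable (Q n)" and mT: "\<And>n. T n \<in> borel_measurable (Q n)"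
  shows "conv_distr Q T UNIV R W"
  unfolding conv_distr_def
proof (intro allI impI)
  fix g :: "'b \<Rightarrow> real" assume g: "continuous_on UNIV g \<and> bounded (g ` UNIV)"
  then obtain B where B: "\<And>y. \<bar>g y\<bar> \<le> B" unfolding bounded_iff by auto
  then have B0: "0 \<le> B" by (meson abs_ge_zero order_trans)
  have gm: "g \<in> borel_measurable borel" using g by (intro borel_measurable_continuous_onI) simp
  have "(\<lambda>n. (\<integral>\<omega>. g (T n \<omega>) \<partial>Q n) - (\<integral>\<omega>. g (V n \<omega>) \<partial>Q n)) \<longlonglongrightarrow> 0"
    unfolding tendsto_iff
  proof (intro allI impI)
    fix \<epsilon> :: real assume \<epsilon>: "\<epsilon> > 0"
    define \<eta> where "\<eta> = \<epsilon> / (8 * (B + 1))"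
    have \<eta>: "\<eta> > 0" "2 * B * (2 * \<eta>) < \<epsilon> / 2"
      unfolding \<eta>_def using \<epsilon> B0 by (auto simp: field_simps)
    obtain r where r: "eventually (\<lambda>n. measure (Q n) {\<omega> \<in> space (Q n). r < \<bar>norm (V n \<omega>)\<bar>} \<le> \<eta>) sequentially"
      using tight \<eta> unfolding OP1_def by blast
    have "uniformly_continuous_on (cball 0 (\<bar>r\<bar> + 1)) g"
      by (rule compact_uniformly_continuous) (use g continuous_on_subset in auto)
    then obtain \<delta> where \<delta>: "\<delta> > 0"
      "\<And>x y. x \<in> cball 0 (\<bar>r\<bar> + 1) \<Longrightarrow> y \<in> cball 0 (\<bar>r\<bar> + 1) \<Longrightarrow> dist y x < \<delta> \<Longrightarrow> dist (g y) (g x) < \<epsilon> / 2"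
      unfolding uniformly_continuous_on_def using \<epsilon> by (metis half_gt_zero)
    define e where "e = min \<delta> 1 / 2"
    have e: "0 < e" "e \<le> 1" "e < \<delta>" unfolding e_def using \<delta>(1) by auto
    then have "eventually (\<lambda>n. measure (Q n) {\<omega> \<in> space (Q n). e < \<bar>dist (T n \<omega>) (V n \<omega>)\<bar>} < \<eta>) sequentially"
      using close \<eta>(1) unfolding oP1_def by (auto intro: order_tendstoD)
    with r show "eventually (\<lambda>n. dist ((\<integral>\<omega>. g (T n \<omega>) \<partial>Q n) - (\<integral>\<omega>. g (V n \<omega>) \<partial>Q n)) 0 < \<epsilon>) sequentially"
    proof eventually_elim
      case (elim n)
      have "\<bar>(\<integral>\<omega>. g (T n \<omega>) \<partial>Q n) - (\<integral>\<omega>. g (V n \<omega>) \<partial>Q n)\<bar>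
          \<le> \<epsilon> / 2 + 2 * B * (measure (Q n) {\<omega> \<in> space (Q n). r < \<bar>norm (V n \<omega>)\<bar>}
              + measure (Q n) {\<omega> \<in> space (Q n). e < \<bar>dist (T n \<omega>) (V n \<omega>)\<bar>})"
      proof (rule prob_space.abs_integral_diff_le_tails[OF Q mT mV gm B _ e])
        show "\<bar>g y - g x\<bar> \<le> \<epsilon> / 2" if "norm x \<le> \<bar>r\<bar> + 1" "norm y \<le> \<bar>r\<bar> + 1" "dist y x < \<delta>" for x y
          using \<delta>(2)[of x y] that by (simp add: dist_real_def)
      qed (use \<epsilon> in simp)
      also have "\<dots> \<le> \<epsilon> / 2 + 2 * B * (2 * \<eta>)"
        using elim B0 by (intro add_left_mono mult_left_mono) auto
      finally show ?case using \<eta>(2) by (simp add: dist_real_def)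
    qed
  qed
  moreover have "(\<lambda>n. \<integral>\<omega>. g (V n \<omega>) \<partial>Q n) \<longlonglongrightarrow> (\<integral>r. g (W r) \<partial>R)"
    using conv g unfolding conv_distr_def by blast
  ultimately show "(\<lambda>n. \<integral>\<omega>. g (T n \<omega>) \<partial>Q n) \<longlonglongrightarrow> (\<integral>r. g (W r) \<partial>R)"
    using tendsto_add by fastforce
qed

section \<open>Windows under the i.i.d. hypothesis\<close>

lemma win_win: "c + m \<le> s \<Longrightarrow> win (win x a s) c m = win x (a + c) m"
  unfolding win_def by (auto simp: fun_eq_iff add.assoc)

lemma prob_space_H0: "prob_space P0 \<Longrightarrow> prob_space (H0 P0)"
  unfolding H0_def by (intro prob_space_PiM) auto

lemma measurable_win_H0: "(\<lambda>\<omega>. win \<omega> a m) \<in> measurable (H0 P0) (PiM {..<m} (\<lambda>_. P0))"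
  unfolding win_def H0_def by (intro measurable_restrict measurable_component_singleton) simp

lemma distr_win_H0:
  assumes "prob_space P0"
  shows "distr (H0 P0) (PiM {..<m} (\<lambda>_. P0)) (\<lambda>\<omega>. win \<omega> a m) = PiM {..<m} (\<lambda>_. P0)"
  using distr_PiM_reindex[of UNIV "\<lambda>_. P0" "(+) a" "{..<m}"] assms
  unfolding H0_def win_def by simp

lemma integral_win_H0:
  fixes f :: "(nat \<Rightarrow> 'a) \<Rightarrow> real"
  assumes "prob_space P0" "f \<in> borel_measurable (PiM {..<m} (\<lambda>_. P0))"
  shows "(\<integral>\<omega>. f (win \<omega> a m) \<partial>H0 P0) = EH0 P0 m f"
proof -
  have "(\<integral>\<omega>. f (win \<omega> b m) \<partial>H0 P0) = (\<integral>\<theta>. f \<theta> \<partial>PiM {..<m} (\<lambda>_. P0))" for b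
    using integral_distr[OF measurable_win_H0 assms(2)] distr_win_H0[OF assms(1)] by simp
  then show ?thesis unfolding EH0_def by simp
qed

lemma integrable_win_H0:
  fixes f :: "(nat \<Rightarrow> 'a) \<Rightarrow> real"
  assumes "prob_space P0" "f \<in> borel_measurable (PiM {..<m} (\<lambda>_. P0))"
    and "\<And>\<theta>. \<theta> \<in> space (PiM {..<m} (\<lambda>_. P0)) \<Longrightarrow> \<bar>f \<theta>\<bar> \<le> B"
  shows "integrable (H0 P0) (\<lambda>\<omega>. f (win \<omega> a m))"
proof -
  interpret prob_space "H0 P0" using assms(1) by (rule prob_space_H0)
  show ?thesis
  proof (rule integrable_const_bound[where B=B])
    show "AE \<omega> in H0 P0. norm (f (win \<omega> a m)) \<le> B"
      using assms(3) measurable_space[OF measurable_win_H0[of a m P0]]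
      by (auto intro!: AE_I2)
    show "(\<lambda>\<omega>. f (win \<omega> a m)) \<in> borel_measurable (H0 P0)"
      using measurable_compose[OF measurable_win_H0 assms(2)] .
  qed
qed

lemma integral_sum_win_H0:
  fixes f :: "(nat \<Rightarrow> 'a) \<Rightarrow> real"
  assumes "prob_space P0" "f \<in> borel_measurable (PiM {..<m} (\<lambda>_. P0))"
    and "\<And>\<theta>. \<theta> \<in> space (PiM {..<m} (\<lambda>_. P0)) \<Longrightarrow> \<bar>f \<theta>\<bar> \<le> B"
  shows "(\<integral>\<omega>. (\<Sum>u\<in>U. f (win \<omega> (c u) m)) \<partial>H0 P0) = real (card U) * EH0 P0 m f"
  using integrable_win_H0[OF assms] integral_win_H0[OF assms(1,2)]
  by (simp add: Bochner_Integration.integral_sum)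

lemma (in prob_space) abs_integral_le_bound:
  fixes f :: "'a \<Rightarrow> real"
  assumes "\<And>x. x \<in> space M \<Longrightarrow> \<bar>f x\<bar> \<le> B"
  shows "\<bar>integral\<^sup>L M f\<bar> \<le> B"
proof -
  have B: "0 \<le> B" using assms by (metis abs_ge_zero order_trans some_in_eq not_empty)
  have "integral\<^sup>L M f \<le> (\<integral>x. B \<partial>M)"
    by (rule integral_mono') (use assms B in \<open>auto simp: abs_le_iff\<close>)
  moreover have "integral\<^sup>L M (\<lambda>x. - f x) \<le> (\<integral>x. B \<partial>M)"
    by (rule integral_mono') (use assms B in \<open>auto simp: abs_le_iff\<close>)
  ultimately show ?thesis by (simp add: prob_space)
qed

locale block_statistics =
  fixes X :: "'a::euclidean_space set"
    and P0 :: "'a measure"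
    and msum mlb Nlb Lsb K :: nat
    and fsm flb fsb :: "(nat \<Rightarrow> 'a) \<Rightarrow> real"
    and \<alpha> :: "nat \<Rightarrow> real set"
    and N s h :: nat
    and Q :: "nat \<Rightarrow> 'w measure"
    and eps :: "nat \<Rightarrow> 'w \<Rightarrow> nat \<Rightarrow> 'a"
  assumes P0: "prob_space P0" "sets P0 = sets (restrict_space borel X)"
    and pos: "msum \<ge> 1" "mlb \<ge> 1" "Nlb \<ge> 1" "Lsb \<ge> 1"
    and fsm_meas: "fsm \<in> borel_measurable (PiM {..<msum} (\<lambda>_. restrict_space borel X))"
    and fsm_bdd: "\<exists>B. \<forall>\<theta> \<in> space (PiM {..<msum} (\<lambda>_. restrict_space borel X)). \<bar>fsm \<theta>\<bar> \<le> B"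
    and flb_meas: "flb \<in> borel_measurable (PiM {..<mlb} (\<lambda>_. restrict_space borel X))"
    and flb_bdd: "\<exists>B. \<forall>\<theta> \<in> space (PiM {..<mlb} (\<lambda>_. restrict_space borel X)). \<bar>flb \<theta>\<bar> \<le> B"
    and fsb_meas: "fsb \<in> borel_measurable (PiM {..<Lsb} (\<lambda>_. restrict_space borel X))"
    and \<alpha>_meas: "\<And>j. j \<le> K \<Longrightarrow> \<alpha> j \<in> sets borel"
    and sig_sum: "sig2H0 P0 msum fsm > 0"
    and sig_lb: "sig2H0 P0 mlb flb > 0"
    and Esb_pos: "\<And>j. j \<le> K \<Longrightarrow> Esb P0 Lsb fsb \<alpha> j > 0"
    and Nsh: "N \<ge> 1" "h \<ge> 1" "s \<ge> h + max msum mlb - 1" "Nlb dvd N" "Lsb dvd h"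
    and Q: "\<And>n. prob_space (Q n)"
    and eps_meas: "\<And>n i. i \<in> {1..n} \<Longrightarrow> (\<lambda>\<omega>. eps n \<omega> i) \<in> measurable (Q n) (restrict_space borel X)"
begin

abbreviation "PX m \<equiv> PiM {..<m} (\<lambda>_. restrict_space borel X)"
abbreviation "E_sum \<equiv> EH0 P0 msum fsm"
abbreviation "E_lb \<equiv> EH0 P0 mlb flb"
abbreviation "\<sigma>_sum \<equiv> sigH0 P0 msum fsm"
abbreviation "\<sigma>_lb \<equiv> sigH0 P0 mlb flb"
abbreviation "E_sb \<equiv> Esb P0 Lsb fsb \<alpha>"
abbreviation "ind_sb j \<theta> \<equiv> (if fsb \<theta> \<in> \<alpha> j then 1 else 0 :: real)"
abbreviation "F \<equiv> fvec P0 msum fsm mlb flb Lsb K fsb \<alpha> h"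
abbreviation "Xc \<equiv> Xcal P0 msum fsm mlb flb Lsb K fsb \<alpha> N s h"
abbreviation "Yc \<equiv> Ycal P0 msum fsm mlb flb Nlb Lsb K fsb \<alpha> N s h"
abbreviation "T_sum \<equiv> Tsum P0 msum fsm"
abbreviation "T_lb \<equiv> Tlb P0 Nlb mlb flb"
abbreviation "T_sb \<equiv> Tsb P0 Lsb K fsb \<alpha>"
abbreviation "q \<equiv> N div Nlb"

definition "h_sb = h div Lsb"
definition "B_sum = (SOME B. \<forall>\<theta> \<in> space (PX msum). \<bar>fsm \<theta>\<bar> \<le> B)"
definition "B_lb = (SOME B. \<forall>\<theta> \<in> space (PX mlb). \<bar>flb \<theta>\<bar> \<le> B)"

definition "G_sum x t = fsm (win x t msum) - E_sum"
definition "G_lb x t = flb (win x t mlb) - E_lb"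
definition "G_sb x j t = ind_sb j (win x (Lsb * (t - 1) + 1) Lsb) - E_sb j"

lemma h_le_s: "h \<le> s" and window_fits: "h + msum \<le> s + 1" "h + mlb \<le> s + 1"
  using Nsh(2,3) pos(1,2) by (simp_all add: max_def split: if_splits)

lemma h_eq: "h = Lsb * h_sb" and h_sb_pos: "h_sb \<ge> 1"
  using Nsh(2,5) pos(4) unfolding h_sb_def by (auto intro: Nat.gr0I)

lemma N_eq: "N = q * Nlb" and q_pos: "q \<ge> 1"
  using Nsh(1,4) by (auto intro: Nat.gr0I)

lemma \<sigma>_sum_pos: "\<sigma>_sum > 0" and \<sigma>_lb_pos: "\<sigma>_lb > 0" and E_sb_pos: "j \<le> K \<Longrightarrow> E_sb j > 0"
  unfolding sigH0_def using sig_sum sig_lb Esb_pos by simp_all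

lemma space_PiM_P0: "space (PiM {..<m} (\<lambda>_. P0)) = space (PX m)"
  using sets_eq_imp_space_eq[OF P0(2)] by (simp add: space_PiM space_restrict_space)

lemma measurable_PiM_P0: "f \<in> borel_measurable (PX m) \<Longrightarrow> f \<in> borel_measurable (PiM {..<m} (\<lambda>_. P0))"
  using measurable_cong_sets[OF sets_PiM_cong[OF refl P0(2)] refl] by blast

lemma fsm_bound: "\<theta> \<in> space (PX msum) \<Longrightarrow> \<bar>fsm \<theta>\<bar> \<le> B_sum"
  using someI_ex[OF fsm_bdd] unfolding B_sum_def by blast

lemma flb_bound: "\<theta> \<in> space (PX mlb) \<Longrightarrow> \<bar>flb \<theta>\<bar> \<le> B_lb"
  using someI_ex[OF flb_bdd] unfolding B_lb_def by blast

lemma ind_sb_measurable: "j \<le> K \<Longrightarrow> ind_sb j \<in> borel_measurable (PX Lsb)"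
  using measurable_compose[OF fsb_meas borel_measurable_indicator[OF \<alpha>_meas]]
  by (simp add: indicator_def of_bool_def)

lemma E_sum_bound: "\<bar>E_sum\<bar> \<le> B_sum" and E_lb_bound: "\<bar>E_lb\<bar> \<le> B_lb"
  unfolding EH0_def using prob_space.abs_integral_le_bound[OF prob_space_H0[OF P0(1)]]
    fsm_bound flb_bound measurable_space[OF measurable_win_H0] space_PiM_P0 by metis+

lemma EH0_ind_sb: "EH0 P0 Lsb (ind_sb j) = E_sb j"
proof -
  have "EH0 P0 Lsb (ind_sb j) = (\<integral>\<omega>. indicator {\<omega> \<in> space (H0 P0). fsb (win \<omega> 1 Lsb) \<in> \<alpha> j} \<omega> \<partial>H0 P0)"
    unfolding EH0_def by (rule Bochner_Integration.integral_cong) (auto simp: indicator_def)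
  then show ?thesis unfolding Esb_def by (simp add: Int_absorb2)
qed

lemma E_sb_le_1: "E_sb j \<le> 1"
  unfolding Esb_def using prob_space.prob_le_1[OF prob_space_H0[OF P0(1)]] .

lemma G_sb_bound: "j \<le> K \<Longrightarrow> \<bar>G_sb x j t\<bar> \<le> 1"
  using E_sb_le_1[of j] E_sb_pos[of j] unfolding G_sb_def by auto

lemma G_sum_bound:
  assumes "\<forall>i\<in>{1..n}. x i \<in> X" "1 \<le> t" "t + msum \<le> n + 1"
  shows "\<bar>G_sum x t\<bar> \<le> 2 * B_sum"
proof -
  have "win x t msum \<in> space (PX msum)" using assms by (auto simp: win_def space_PiM space_restrict_space)
  then show ?thesis using fsm_bound E_sum_bound unfolding G_sum_def by fastforce
qed

lemma G_lb_bound: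
  assumes "\<forall>i\<in>{1..n}. x i \<in> X" "1 \<le> t" "t + mlb \<le> n + 1"
  shows "\<bar>G_lb x t\<bar> \<le> 2 * B_lb"
proof -
  have "win x t mlb \<in> space (PX mlb)" using assms by (auto simp: win_def space_PiM space_restrict_space)
  then show ?thesis using flb_bound E_lb_bound unfolding G_lb_def by fastforce
qed

section \<open>The auxiliary vectors as normalized sums over window cells\<close>

lemma fvec_sum_win: "F (K + 2) (win x (a + 1) s) = (\<Sum>u=1..h. fsm (win x (a + u) msum)) / \<sigma>_sum"
proof -
  have "(\<Sum>u=1..h. fsm (win (win x (a + 1) s) (u - 1) msum)) = (\<Sum>u=1..h. fsm (win x (a + u) msum))"
    using window_fits by (intro sum.cong) (auto simp: win_win)
  then show ?thesis by (simp add: fvec_def)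
qed

lemma fvec_lb_win: "F (K + 1) (win x (a + 1) s) = (\<Sum>u=1..h. flb (win x (a + u) mlb)) / \<sigma>_lb"
proof -
  have "(\<Sum>u=1..h. flb (win (win x (a + 1) s) (u - 1) mlb)) = (\<Sum>u=1..h. flb (win x (a + u) mlb))"
    using window_fits by (intro sum.cong) (auto simp: win_win)
  then show ?thesis by (simp add: fvec_def)
qed

lemma fvec_sb_win:
  assumes "j \<le> K"
  shows "F j (win x (a + 1) s) = (\<Sum>u=1..h_sb. ind_sb j (win x (a + Lsb * (u - 1) + 1) Lsb)) / sqrt (E_sb j)"
proof -
  have "Lsb * (u - 1) + Lsb \<le> s" if "u \<in> {1..h_sb}" for u
    using that h_eq h_le_s mult_le_mono2[of u h_sb Lsb] by (cases u) auto
  then have "(\<Sum>u=1..h_sb. ind_sb j (win (win x (a + 1) s) (Lsb * (u - 1)) Lsb))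
      = (\<Sum>u=1..h_sb. ind_sb j (win x (a + Lsb * (u - 1) + 1) Lsb))"
    by (intro sum.cong) (auto simp: win_win)
  then show ?thesis using assms by (simp add: fvec_def h_sb_def)
qed

lemma integral_fvec_sum: "(\<integral>\<omega>. F (K + 2) (win \<omega> 1 s) \<partial>H0 P0) = real h * E_sum / \<sigma>_sum"
  using integral_sum_win_H0[OF P0(1) measurable_PiM_P0[OF fsm_meas] fsm_bound[folded space_PiM_P0],
      where U="{1..h}" and c="\<lambda>u. u"]
  by (simp add: fvec_sum_win[of _ 0, simplified])

lemma integral_fvec_lb: "(\<integral>\<omega>. F (K + 1) (win \<omega> 1 s) \<partial>H0 P0) = real h * E_lb / \<sigma>_lb"
  using integral_sum_win_H0[OF P0(1) measurable_PiM_P0[OF flb_meas] flb_bound[folded space_PiM_P0],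
      where U="{1..h}" and c="\<lambda>u. u"]
  by (simp add: fvec_lb_win[of _ 0, simplified])

lemma integral_fvec_sb:
  assumes "j \<le> K"
  shows "(\<integral>\<omega>. F j (win \<omega> 1 s) \<partial>H0 P0) = real h_sb * E_sb j / sqrt (E_sb j)"
  using integral_sum_win_H0[OF P0(1) measurable_PiM_P0[OF ind_sb_measurable[OF assms]],
      where B=1 and U="{1..h_sb}" and c="\<lambda>u. Lsb * (u - 1) + 1"]
  by (simp add: fvec_sb_win[OF assms, of _ 0, simplified] EH0_ind_sb)

lemma Xcal_eq_sum_window_cells:
  assumes "h' \<ge> 1"
    and "\<And>i. F j (win x (h * i + 1) s) - (\<integral>\<omega>. F j (win \<omega> 1 s) \<partial>H0 P0) = (\<Sum>u=1..h'. G (h' * i + u)) / c"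
  shows "Xc n x k j = (\<Sum>t\<in>window_cells (n div N) h s h' k. G t) / (c * sqrt (real n))"
proof -
  have "Xc n x k j = (1 / sqrt (real n)) * (\<Sum>i\<in>window_starts (n div N) h s k. (\<Sum>u=1..h'. G (h' * i + u)) / c)"
    unfolding Xcal_def Let_def assms(2) window_starts_def ..
  also have "\<dots> = (1 / sqrt (real n)) * ((\<Sum>i\<in>window_starts (n div N) h s k. \<Sum>u=1..h'. G (h' * i + u)) / c)"
    by (simp add: sum_divide_distrib)
  also have "\<dots> = (\<Sum>t\<in>window_cells (n div N) h s h' k. G t) / (c * sqrt (real n))"
    unfolding sum_window_cells[OF assms(1) Nsh(2)] by simp
  finally show ?thesis .
qed

lemma Xcal_sum: "Xc n x k (K + 2) = (\<Sum>t\<in>window_cells (n div N) h s h k. G_sum x t) / (\<sigma>_sum * sqrt (real n))"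
proof (rule Xcal_eq_sum_window_cells[OF Nsh(2)])
  fix i
  show "F (K + 2) (win x (h * i + 1) s) - (\<integral>\<omega>. F (K + 2) (win \<omega> 1 s) \<partial>H0 P0)
      = (\<Sum>u=1..h. G_sum x (h * i + u)) / \<sigma>_sum"
    unfolding fvec_sum_win integral_fvec_sum by (simp add: G_sum_def sum_subtractf diff_divide_distrib)
qed

lemma Xcal_lb: "Xc n x k (K + 1) = (\<Sum>t\<in>window_cells (n div N) h s h k. G_lb x t) / (\<sigma>_lb * sqrt (real n))"
proof (rule Xcal_eq_sum_window_cells[OF Nsh(2)])
  fix i
  show "F (K + 1) (win x (h * i + 1) s) - (\<integral>\<omega>. F (K + 1) (win \<omega> 1 s) \<partial>H0 P0)
      = (\<Sum>u=1..h. G_lb x (h * i + u)) / \<sigma>_lb"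
    unfolding fvec_lb_win integral_fvec_lb by (simp add: G_lb_def sum_subtractf diff_divide_distrib)
qed

lemma Xcal_sb:
  assumes "j \<le> K"
  shows "Xc n x k j = (\<Sum>t\<in>window_cells (n div N) h s h_sb k. G_sb x j t) / (sqrt (E_sb j) * sqrt (real n))"
proof (rule Xcal_eq_sum_window_cells[OF h_sb_pos])
  fix i
  have "h * i + Lsb * (u - 1) = Lsb * (h_sb * i + u - 1)" if "u \<in> {1..h_sb}" for u
    using that h_eq by (cases u) (auto simp: algebra_simps)
  then have "(\<Sum>u=1..h_sb. ind_sb j (win x (h * i + Lsb * (u - 1) + 1) Lsb))
      = (\<Sum>u=1..h_sb. ind_sb j (win x (Lsb * (h_sb * i + u - 1) + 1) Lsb))"
    by (intro sum.cong) auto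
  then show "F j (win x (h * i + 1) s) - (\<integral>\<omega>. F j (win \<omega> 1 s) \<partial>H0 P0)
      = (\<Sum>u=1..h_sb. G_sb x j (h_sb * i + u)) / sqrt (E_sb j)"
    unfolding fvec_sb_win[OF assms] integral_fvec_sb[OF assms]
    by (simp add: G_sb_def sum_subtractf diff_divide_distrib)
qed

lemma sum_Xcal_UN_window_cells:
  assumes "\<And>k. Xc n x k j = (\<Sum>t\<in>window_cells (n div N) h s h' k. G t) / c"
    and "h = p * h'" "p \<ge> 1" "finite I" "\<And>k. k \<in> I \<Longrightarrow> k \<ge> 1"
  shows "(\<Sum>k\<in>I. Xc n x k j) = (\<Sum>t\<in>(\<Union>k\<in>I. window_cells (n div N) h s h' k). G t) / c"
  using sum_UN_window_cells[OF assms(2,3) h_le_s Nsh(2) assms(4,5)]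
  by (simp add: assms(1) sum_divide_distrib)

lemma Ycal_eq_sum_Xcal: "k \<ge> 1 \<Longrightarrow> Yc n x k j = (\<Sum>k'\<in>{q * (k - 1) + 1..q * k}. Xc n x k' j)"
  unfolding Ycal_def using sum.shift_bounds_cl_nat_ivl[of "\<lambda>k'. Xc n x k' j" 1 "q * (k - 1)" q]
  by (cases k) (simp_all add: add.commute)

lemma sum_Ycal_eq_sum_Xcal: "(\<Sum>k=1..Nlb. Yc n x k j) = (\<Sum>k=1..N. Xc n x k j)"
proof -
  have "(\<Sum>k=1..Nlb. Yc n x k j) = (\<Sum>t=1..q * Nlb. Xc n x t j)"
    unfolding Ycal_def by (rule sum_consecutive_blocks)
  then show ?thesis by (simp only: N_eq[symmetric])
qed

section \<open>Deterministic approximation of the statistics\<close>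

definition "n0 = N * (s + h + 2) + 2 * msum"

lemma block_length_bounds:
  assumes "n \<ge> n0"
  shows "n div N \<ge> s + h + 2" "N * (n div N) \<le> n" "real n < real N * (real (n div N) + 1)"
proof -
  have "N * (s + h + 2) \<le> n" using assms unfolding n0_def by simp
  then show "n div N \<ge> s + h + 2"
    using Nsh(1) by (simp add: less_eq_div_iff_mult_less_eq mult.commute)
  show "N * (n div N) \<le> n" by simp
  show "real n < real N * (real (n div N) + 1)" using real_div_bounds[OF Nsh(1)] by blast
qed

lemma long_block_length_bounds:
  assumes "n \<ge> n0"
  shows "q * (n div N) \<le> n div Nlb" "n div Nlb \<le> q * (n div N) + q"
proof -
  have qN: "q * Nlb = N" by (rule N_eq[symmetric])
  have eq: "q * (n div N) * Nlb = N * (n div N)" "(q * (n div N) + q) * Nlb = N * (n div N) + N"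
    by (metis qN mult.assoc mult.commute, metis qN add_mult_distrib mult.assoc mult.commute)
  have "N * (n div N) \<le> n" "n < N * (n div N) + N"
    using real_div_bounds[OF Nsh(1), of n] by (simp_all add: algebra_simps flip: of_nat_mult of_nat_add)
  then have "q * (n div N) * Nlb \<le> n" "n < (q * (n div N) + q) * Nlb" unfolding eq by simp_all
  then have "q * (n div N) \<le> n div Nlb" "n div Nlb < q * (n div N) + q"
    using pos(3) by (simp_all add: less_eq_div_iff_mult_less_eq div_less_iff_less_mult)
  then show "q * (n div N) \<le> n div Nlb" "n div Nlb \<le> q * (n div N) + q" by simp_all
qed

lemma mlb_le_long_block:
  assumes "n \<ge> n0"
  shows "mlb \<le> n div Nlb"
proof -
  have "mlb \<le> n div N" using block_length_bounds(1)[OF assms] window_fits by linarith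
  also have "\<dots> \<le> q * (n div N)" using q_pos by simp
  also have "\<dots> \<le> n div Nlb" by (rule long_block_length_bounds(1)[OF assms])
  finally show ?thesis .
qed

lemma Nlb_le: "n \<ge> n0 \<Longrightarrow> Nlb \<le> n"
  using N_eq q_pos mult_le_mono1[of 1 q Nlb] unfolding n0_def by auto

lemma Lsb_le:
  assumes "n \<ge> n0"
  shows "Lsb \<le> n"
proof -
  have "Lsb \<le> h" using h_eq h_sb_pos mult_le_mono2[of 1 h_sb Lsb] by simp
  also have "h \<le> N * (s + h + 2)" using Nsh(1) mult_le_mono1[of 1 N "s + h + 2"] by simp
  finally show ?thesis using assms unfolding n0_def by simp
qed

lemma UN_window_cells_range:
  assumes "h = p * h'" "p \<ge> 1" "t \<in> (\<Union>k\<in>{1..N}. window_cells (n div N) h s h' k)"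
  shows "1 \<le> t" "p * t + s \<le> n + h"
proof -
  obtain k where k: "k \<in> {1..N}" "t \<in> window_cells (n div N) h s h' k" using assms(3) by blast
  note b = window_cells_bounds[OF assms(1,2) k(2)]
  show "1 \<le> t" using b(1) by (cases t) auto
  have "n div N * k \<le> n div N * N" using k by (intro mult_le_mono2) auto
  also have "\<dots> \<le> n" by (simp add: mult.commute)
  finally show "p * t + s \<le> n + h" using b(2) by linarith
qed

lemma B_sum_nonneg: "B_sum \<ge> 0" and B_lb_nonneg: "B_lb \<ge> 0"
  using E_sum_bound E_lb_bound by linarith+

lemma Tsum_sum_diff:
  assumes n: "n \<ge> n0" and x: "\<forall>i\<in>{1..n}. x i \<in> X"
  defines "S \<equiv> \<Union>k\<in>{1..N}. window_cells (n div N) h s h k"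
  shows "\<bar>sum (G_sum x) {1..n + 1 - msum} - sum (G_sum x) S\<bar> \<le> 2 * B_sum * (real N * (real s + real h + 2))"
proof -
  define T where "T = {1..n + 1 - msum}"
  note L = block_length_bounds[OF n]
  have "S \<subseteq> T"
  proof
    fix t assume "t \<in> S"
    then have "1 \<le> t" "1 * t + s \<le> n + h" using UN_window_cells_range[of 1 h t n] unfolding S_def by simp_all
    then show "t \<in> T" using window_fits unfolding T_def by simp
  qed
  moreover have "\<bar>G_sum x t\<bar> \<le> 2 * B_sum" if "t \<in> T" for t
    using that by (intro G_sum_bound[OF x]) (auto simp: T_def)
  ultimately have "\<bar>sum (G_sum x) T - sum (G_sum x) S\<bar> \<le> 2 * B_sum * (real (card T) - real (card S))"
    using abs_sum_diff_le_complements[of T T S "G_sum x" "2 * B_sum"] by (simp add: T_def)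
  moreover have "real (card S) \<ge> real N * (real (n div N) - real s - real h - 1)"
    using card_UN_window_cells_ge[of h 1 h s "{1..N}" "n div N"] h_le_s Nsh(2) L(1) unfolding S_def by simp
  then have "real (card T) - real (card S) \<le> real N * (real s + real h + 2)"
    using L(3) pos(1) n unfolding T_def n0_def by (simp add: of_nat_diff algebra_simps)
  ultimately show ?thesis
    using B_sum_nonneg mult_left_mono[of "real (card T) - real (card S)" "real N * (real s + real h + 2)" "2 * B_sum"]
    unfolding T_def by linarith
qed

lemma Tsum_approx:
  obtains C where "C \<ge> 0" and "\<And>n x. n \<ge> n0 \<Longrightarrow> \<forall>i\<in>{1..n}. x i \<in> X \<Longrightarrow>
    \<bar>T_sum n x - (\<Sum>k=1..Nlb. Yc n x k (K + 2))\<bar> \<le> C / sqrt (real n)"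
proof -
  define C where "C = (4 * B_sum * (real msum - 1) + 2 * B_sum * (real N * (real s + real h + 2))) / \<sigma>_sum"
  have bound: "\<bar>T_sum n x - (\<Sum>k=1..Nlb. Yc n x k (K + 2))\<bar> \<le> C / sqrt (real n)"
    if n: "n \<ge> n0" and x: "\<forall>i\<in>{1..n}. x i \<in> X" for n x
  proof -
    define S where "S = (\<Union>k\<in>{1..N}. window_cells (n div N) h s h k)"
    define T where "T = {1..n + 1 - msum}"
    have nm: "n \<ge> 2 * msum" using n unfolding n0_def by simp
    have Y: "(\<Sum>k=1..Nlb. Yc n x k (K + 2)) = sum (G_sum x) S / (\<sigma>_sum * sqrt (real n))"
      unfolding sum_Ycal_eq_sum_Xcal S_def by (rule sum_Xcal_UN_window_cells[OF Xcal_sum, of 1]) simp_all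
    have T: "T_sum n x = sum (G_sum x) T / (\<sigma>_sum * sqrt (real (n + 1 - msum)))"
      unfolding Tsum_def G_sum_def T_def by (rule refl)
    have "\<bar>sum (G_sum x) T\<bar> \<le> (\<Sum>t\<in>T. \<bar>G_sum x t\<bar>)" by (rule sum_abs)
    also have "\<dots> \<le> real (card T) * (2 * B_sum)"
      by (rule sum_bounded_above) (auto simp: T_def intro!: G_sum_bound[OF x])
    also have "\<dots> \<le> real n * (2 * B_sum)" using pos(1) B_sum_nonneg by (intro mult_right_mono) (auto simp: T_def)
    finally have A: "\<bar>sum (G_sum x) T\<bar> \<le> 2 * B_sum * real n" by (simp only: mult.commute)
    have a: "1 \<le> real (n + 1 - msum)" "real (n + 1 - msum) \<le> real n" "real n \<le> 2 * real (n + 1 - msum)"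
      using nm pos(1) by (auto simp: of_nat_diff)
    have "\<bar>T_sum n x - (\<Sum>k=1..Nlb. Yc n x k (K + 2))\<bar>
        \<le> (2 * (2 * B_sum) * (real n - real (n + 1 - msum)) + 2 * B_sum * (real N * (real s + real h + 2)))
          / (\<sigma>_sum * sqrt (real n))"
      unfolding T Y
      by (rule normalized_sums_diff_bound[OF \<sigma>_sum_pos a A Tsum_sum_diff[OF n x, folded S_def T_def]])
    also have "\<dots> = C / sqrt (real n)" using nm by (simp add: C_def of_nat_diff)
    finally show ?thesis .
  qed
  have "C \<ge> 0"
    unfolding C_def using B_sum_nonneg pos(1) \<sigma>_sum_pos
    by (intro divide_nonneg_pos add_nonneg_nonneg mult_nonneg_nonneg) auto
  then show thesis using bound by (rule that)
qed

lemma long_block_cell_counts: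
  assumes n: "n \<ge> n0" and k: "k \<in> {1..Nlb}"
  defines "L \<equiv> n div N" and "Llb \<equiv> n div Nlb"
  shows "real (card {L * q * (k - 1) + 1..Llb * k + 1 - mlb})
           \<le> real (card (\<Union>k'\<in>{q * (k - 1) + 1..q * k}. window_cells L h s h k')) + real N + 1
             + real q * (real s + real h + 1)"
    and "real (card {L * q * (k - 1) + 1..Llb * k + 1 - mlb})
           \<le> real (card {Llb * (k - 1) + 1..Llb * k + 1 - mlb}) + real N"
proof -
  note LL = long_block_length_bounds[OF n, folded L_def Llb_def]
  have k1: "1 \<le> k" "k \<le> Nlb" using k by auto
  have Lmlb: "mlb \<le> Llb" using mlb_le_long_block[OF n] unfolding Llb_def .
  have Llbk: "Llb * k = Llb * (k - 1) + Llb" using k1 by (cases k) auto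
  have LqLlb: "L * q * (k - 1) \<le> Llb * (k - 1)" using LL(1) by (simp add: mult.commute)
  have le: "L * q * (k - 1) \<le> Llb * k + 1 - mlb" and mlb: "mlb \<le> Llb * k + 1"
    using Llbk LqLlb Lmlb by linarith+
  have "real (card {a + 1..b}) = real b - real a" if "a \<le> b" for a b :: nat
    using that by (simp add: of_nat_diff)
  from this[OF le] have Out: "real (card {L * q * (k - 1) + 1..Llb * k + 1 - mlb})
      = real Llb * real k + 1 - real mlb - real L * real q * (real k - 1)"
    using mlb k1 by (simp add: of_nat_diff)
  have "card {q * (k - 1) + 1..q * k} = q" using k1 by (cases k) (simp_all add: algebra_simps)
  moreover have "real (card (\<Union>k'\<in>{q * (k - 1) + 1..q * k}. window_cells L h s h k'))
      \<ge> real (card {q * (k - 1) + 1..q * k}) * ((real L - real s - real h) / real 1 - 1)"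
    by (rule card_UN_window_cells_ge)
      (use h_le_s Nsh(2) block_length_bounds(1)[OF n, folded L_def] in auto)
  ultimately have U: "real (card (\<Union>k'\<in>{q * (k - 1) + 1..q * k}. window_cells L h s h k'))
      \<ge> real q * real L - real q * (real s + real h + 1)"
    by (simp add: algebra_simps)
  have V: "real (card {Llb * (k - 1) + 1..Llb * k + 1 - mlb}) = real Llb + 1 - real mlb"
    using Lmlb unfolding Llbk by (simp add: of_nat_diff)
  have "real Llb \<le> real q * real L + real q" using LL(2) by (simp flip: of_nat_mult of_nat_add)
  then have Llb_k: "real Llb * real k \<le> real q * real L * real k + real q * real k"
    and Llb_k1: "real Llb * (real k - 1) \<le> real q * real L * (real k - 1) + real q * (real k - 1)"
    using k1 by (simp_all add: mult_right_mono flip: distrib_right)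
  have "real q * real k \<le> real N" using k1 N_eq mult_le_mono2[of k Nlb q] by (simp flip: of_nat_mult)
  then show "real (card {L * q * (k - 1) + 1..Llb * k + 1 - mlb})
      \<le> real (card (\<Union>k'\<in>{q * (k - 1) + 1..q * k}. window_cells L h s h k')) + real N + 1
        + real q * (real s + real h + 1)"
    and "real (card {L * q * (k - 1) + 1..Llb * k + 1 - mlb})
      \<le> real (card {Llb * (k - 1) + 1..Llb * k + 1 - mlb}) + real N"
    using Out U V Llb_k Llb_k1 q_pos by (simp_all add: algebra_simps)
qed

lemma Tlb_block_sum_diff:
  assumes n: "n \<ge> n0" and x: "\<forall>i\<in>{1..n}. x i \<in> X" and k: "k \<in> {1..Nlb}"
  defines "U \<equiv> \<Union>k'\<in>{q * (k - 1) + 1..q * k}. window_cells (n div N) h s h k'"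
    and "V \<equiv> {n div Nlb * (k - 1) + 1..n div Nlb * k + 1 - mlb}"
  shows "\<bar>sum (G_lb x) V - sum (G_lb x) U\<bar> \<le> 2 * B_lb * (2 * real N + 1 + real q * (real s + real h + 1))"
proof -
  define L where "L = n div N"
  define Llb where "Llb = n div Nlb"
  define Out where "Out = {L * q * (k - 1) + 1..Llb * k + 1 - mlb}"
  note LL = long_block_length_bounds[OF n, folded L_def Llb_def]
  have k1: "1 \<le> k" "k \<le> Nlb" using k by auto
  have Lmlb: "mlb \<le> Llb" using mlb_le_long_block[OF n] unfolding Llb_def .
  have "Llb * k \<le> Llb * Nlb" using k1 by simp
  then have Llb_k: "Llb * k \<le> n" unfolding Llb_def using div_times_less_eq_dividend[of n Nlb] by linarith
  have "U \<subseteq> Out"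
  proof
    fix t assume "t \<in> U"
    then obtain k' where k': "q * (k - 1) + 1 \<le> k'" "k' \<le> q * k" "t \<in> window_cells L h s h k'"
      unfolding U_def L_def by auto
    have b: "L * (k' - 1) < t" "t + s \<le> L * k' + h"
      using window_cells_bounds[of h 1 h, OF _ _ k'(3)] by simp_all
    have "L * q * (k - 1) \<le> L * (k' - 1)" unfolding mult.assoc using k'(1) by (intro mult_le_mono2) linarith
    then have "L * q * (k - 1) + 1 \<le> t" using b(1) by linarith
    moreover have "L * k' \<le> (q * L) * k" using k'(2) mult_le_mono2[of k' "q * k" L] by (simp add: ac_simps)
    then have "t + mlb \<le> Llb * k + 1" using b(2) window_fits LL(1) mult_le_mono1[of "q * L" Llb k] by linarith
    ultimately show "t \<in> Out" unfolding Out_def by simp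
  qed
  moreover have "V \<subseteq> Out"
    using LL(1) mult_le_mono1[of "q * L" Llb "k - 1"] unfolding V_def Out_def Llb_def[symmetric]
    by (simp add: ac_simps)
  moreover have "\<bar>G_lb x t\<bar> \<le> 2 * B_lb" if "t \<in> Out" for t
    using that Lmlb Llb_k by (intro G_lb_bound[OF x]) (auto simp: Out_def)
  ultimately have "\<bar>sum (G_lb x) U - sum (G_lb x) V\<bar>
      \<le> 2 * B_lb * (real (card Out) - real (card U)) + 2 * B_lb * (real (card Out) - real (card V))"
    by (intro abs_sum_diff_le_complements) (simp_all add: Out_def)
  also have "\<dots> \<le> 2 * B_lb * (real N + 1 + real q * (real s + real h + 1)) + 2 * B_lb * real N"
  proof -
    have "real (card Out) - real (card U) \<le> real N + 1 + real q * (real s + real h + 1)"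
      "real (card Out) - real (card V) \<le> real N"
      using long_block_cell_counts[OF n k] unfolding Out_def U_def V_def L_def Llb_def by linarith+
    then show ?thesis using B_lb_nonneg by (intro add_mono mult_left_mono) auto
  qed
  finally show ?thesis by (simp add: abs_minus_commute algebra_simps)
qed


lemma Tlb_block_approx:
  obtains C where "C \<ge> 0" and "\<And>n x k. n \<ge> n0 \<Longrightarrow> \<forall>i\<in>{1..n}. x i \<in> X \<Longrightarrow> k \<in> {1..Nlb} \<Longrightarrow>
    \<bar>(Wlb Nlb mlb flb n x k - (real (n div Nlb) - real mlb + 1) * E_lb)\<^sup>2 / (real (n div Nlb) * \<sigma>_lb\<^sup>2)
       - real Nlb * (Yc n x k (K + 1))\<^sup>2\<bar> \<le> C * (1 + (Yc n x k (K + 1))\<^sup>2) / sqrt (real n)"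
proof -
  define D where "D = 2 * B_lb * (2 * real N + 1 + real q * (real s + real h + 1)) / \<sigma>_lb"
  define C where "C = 4 * real Nlb * D + 2 * real Nlb * D\<^sup>2 + 2 * (real Nlb)\<^sup>2"
  have D: "D \<ge> 0" using B_lb_nonneg \<sigma>_lb_pos by (simp add: D_def)
  have bound: "\<bar>(Wlb Nlb mlb flb n x k - (real (n div Nlb) - real mlb + 1) * E_lb)\<^sup>2 / (real (n div Nlb) * \<sigma>_lb\<^sup>2)
       - real Nlb * (Yc n x k (K + 1))\<^sup>2\<bar> \<le> C * (1 + (Yc n x k (K + 1))\<^sup>2) / sqrt (real n)"
    if n: "n \<ge> n0" and x: "\<forall>i\<in>{1..n}. x i \<in> X" and k: "k \<in> {1..Nlb}" for n x k
  proof -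
    define U where "U = (\<Union>k'\<in>{q * (k - 1) + 1..q * k}. window_cells (n div N) h s h k')"
    define V where "V = {n div Nlb * (k - 1) + 1..n div Nlb * k + 1 - mlb}"
    have "sum (G_lb x) V = (\<Sum>t\<in>V. flb (win x t mlb)) - real (card V) * E_lb"
      unfolding G_lb_def by (simp add: sum_subtractf)
    moreover have "real (card V) = real (n div Nlb) - real mlb + 1"
      using mlb_le_long_block[OF n] k unfolding V_def by (cases k) (simp_all add: of_nat_diff algebra_simps)
    ultimately have W: "Wlb Nlb mlb flb n x k - (real (n div Nlb) - real mlb + 1) * E_lb = sum (G_lb x) V"
      unfolding Wlb_def Let_def V_def by simp
    have k1: "1 \<le> k" using k by simp
    have Y: "Yc n x k (K + 1) = sum (G_lb x) U / (\<sigma>_lb * sqrt (real n))"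
      unfolding Ycal_eq_sum_Xcal[OF k1] U_def by (rule sum_Xcal_UN_window_cells[OF Xcal_lb, of 1]) simp_all
    have "\<bar>sum (G_lb x) V / \<sigma>_lb - sum (G_lb x) U / \<sigma>_lb\<bar> = \<bar>sum (G_lb x) V - sum (G_lb x) U\<bar> / \<sigma>_lb"
      using \<sigma>_lb_pos by (simp flip: diff_divide_distrib)
    also have "\<dots> \<le> D"
      unfolding D_def using Tlb_block_sum_diff[OF n x k] \<sigma>_lb_pos unfolding U_def V_def
      by (intro divide_right_mono) auto
    finally have sq: "\<bar>(sum (G_lb x) V / \<sigma>_lb)\<^sup>2 / real (n div Nlb) - real Nlb * (sum (G_lb x) U / \<sigma>_lb)\<^sup>2 / real n\<bar>
        \<le> C * (1 + (sum (G_lb x) U / \<sigma>_lb)\<^sup>2 / real n) / sqrt (real n)"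
      unfolding C_def by (rule square_div_count_approx[OF pos(3) Nlb_le[OF n] D])
    have Y2: "(sum (G_lb x) U / \<sigma>_lb)\<^sup>2 / real n = (Yc n x k (K + 1))\<^sup>2"
      unfolding Y by (simp add: power_divide power_mult_distrib)
    then have "real Nlb * (sum (G_lb x) U / \<sigma>_lb)\<^sup>2 / real n = real Nlb * (Yc n x k (K + 1))\<^sup>2"
      by (simp flip: times_divide_eq_right)
    moreover have "(sum (G_lb x) V / \<sigma>_lb)\<^sup>2 / real (n div Nlb)
        = (Wlb Nlb mlb flb n x k - (real (n div Nlb) - real mlb + 1) * E_lb)\<^sup>2 / (real (n div Nlb) * \<sigma>_lb\<^sup>2)"
      unfolding W by (simp add: power_divide)
    ultimately show ?thesis using sq unfolding Y2 by simp
  qed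
  have "C \<ge> 0" using D by (simp add: C_def)
  then show thesis using bound by (rule that)
qed

lemma Tlb_approx:
  obtains C where "C \<ge> 0" and "\<And>n x. n \<ge> n0 \<Longrightarrow> \<forall>i\<in>{1..n}. x i \<in> X \<Longrightarrow>
    \<bar>T_lb n x - real Nlb * (\<Sum>k=1..Nlb. (Yc n x k (K + 1))\<^sup>2)\<bar>
      \<le> C * (real Nlb + (\<Sum>k=1..Nlb. (Yc n x k (K + 1))\<^sup>2)) / sqrt (real n)"
proof -
  obtain C where C: "C \<ge> 0" "\<And>n x k. n \<ge> n0 \<Longrightarrow> \<forall>i\<in>{1..n}. x i \<in> X \<Longrightarrow> k \<in> {1..Nlb} \<Longrightarrow>
    \<bar>(Wlb Nlb mlb flb n x k - (real (n div Nlb) - real mlb + 1) * E_lb)\<^sup>2 / (real (n div Nlb) * \<sigma>_lb\<^sup>2)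
       - real Nlb * (Yc n x k (K + 1))\<^sup>2\<bar> \<le> C * (1 + (Yc n x k (K + 1))\<^sup>2) / sqrt (real n)"
    using Tlb_block_approx by blast
  have bound: "\<bar>T_lb n x - real Nlb * (\<Sum>k=1..Nlb. (Yc n x k (K + 1))\<^sup>2)\<bar>
      \<le> C * (real Nlb + (\<Sum>k=1..Nlb. (Yc n x k (K + 1))\<^sup>2)) / sqrt (real n)"
    if n: "n \<ge> n0" and x: "\<forall>i\<in>{1..n}. x i \<in> X" for n x
  proof -
    have eq: "T_lb n x - real Nlb * (\<Sum>k=1..Nlb. (Yc n x k (K + 1))\<^sup>2)
        = (\<Sum>k=1..Nlb. (Wlb Nlb mlb flb n x k - (real (n div Nlb) - real mlb + 1) * E_lb)\<^sup>2
            / (real (n div Nlb) * \<sigma>_lb\<^sup>2) - real Nlb * (Yc n x k (K + 1))\<^sup>2)"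
      unfolding Tlb_def Let_def by (simp add: sum_subtractf sum_distrib_left)
    have "\<bar>\<Sum>k=1..Nlb. (Wlb Nlb mlb flb n x k - (real (n div Nlb) - real mlb + 1) * E_lb)\<^sup>2
            / (real (n div Nlb) * \<sigma>_lb\<^sup>2) - real Nlb * (Yc n x k (K + 1))\<^sup>2\<bar>
        \<le> (\<Sum>k=1..Nlb. C * (1 + (Yc n x k (K + 1))\<^sup>2) / sqrt (real n))"
      using C(2)[OF n x] by (intro order_trans[OF sum_abs] sum_mono) simp
    also have "\<dots> = C * (real Nlb + (\<Sum>k=1..Nlb. (Yc n x k (K + 1))\<^sup>2)) / sqrt (real n)"
      by (simp add: sum_divide_distrib[symmetric] sum_distrib_left[symmetric] sum.distrib)
    finally show ?thesis unfolding eq[symmetric] .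
  qed
  show thesis using C(1) bound by (rule that)
qed

lemma Tsb_sum_diff:
  assumes n: "n \<ge> n0" and "j \<le> K"
  defines "S \<equiv> \<Union>k\<in>{1..N}. window_cells (n div N) h s h_sb k"
  shows "\<bar>sum (G_sb x j) {1..n div Lsb} - sum (G_sb x j) S\<bar> \<le> real N * (real s + real h + 2)"
proof -
  note L = block_length_bounds[OF n]
  have "S \<subseteq> {1..n div Lsb}"
  proof
    fix t assume "t \<in> S"
    then have "1 \<le> t" "Lsb * t + s \<le> n + h"
      using UN_window_cells_range[OF h_eq pos(4), of t n] unfolding S_def by simp_all
    then show "t \<in> {1..n div Lsb}" using h_le_s pos(4) by (simp add: less_eq_div_iff_mult_less_eq mult.commute)
  qed
  moreover have "real (card S) \<ge> real N * ((real (n div N) - real s - real h) / real Lsb - 1)"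
    using card_UN_window_cells_ge[OF h_eq pos(4) h_le_s h_sb_pos, of "{1..N}" "n div N"] L(1)
    unfolding S_def by simp
  moreover have "real (n div Lsb) \<le> real N * (real (n div N) + 1) / real Lsb"
    using real_div_bounds[OF pos(4), of n] L(3) pos(4) by (simp add: field_simps)
  moreover have "real N * (real (n div N) + 1) / real Lsb - real N * ((real (n div N) - real s - real h) / real Lsb - 1)
      = real N * (real s + real h + 1) / real Lsb + real N"
    using pos(4) by (simp add: field_simps)
  moreover have "real N * (real s + real h + 1) / real Lsb \<le> real N * (real s + real h + 1)"
    using pos(4) divide_left_mono[of 1 "real Lsb" "real N * (real s + real h + 1)"] by simp
  ultimately have "real (card {1..n div Lsb}) - real (card S) \<le> real N * (real s + real h + 1) + real N"
    by simp
  moreover have "\<bar>sum (G_sb x j) {1..n div Lsb} - sum (G_sb x j) S\<bar>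
      \<le> 1 * (real (card {1..n div Lsb}) - real (card {1..n div Lsb})) + 1 * (real (card {1..n div Lsb}) - real (card S))"
    by (rule abs_sum_diff_le_complements) (use \<open>S \<subseteq> {1..n div Lsb}\<close> G_sb_bound[OF \<open>j \<le> K\<close>] in auto)
  ultimately show ?thesis by (simp add: algebra_simps)
qed

lemma Tsb_term_approx:
  obtains C where "\<And>j. C j \<ge> 0" and "\<And>n x j. n \<ge> n0 \<Longrightarrow> j \<le> K \<Longrightarrow>
    \<bar>(wsb Lsb fsb \<alpha> n x j - real (n div Lsb) * E_sb j)\<^sup>2 / (real (n div Lsb) * E_sb j)
      - real Lsb * (\<Sum>k=1..Nlb. Yc n x k j)\<^sup>2\<bar> \<le> C j * (1 + (\<Sum>k=1..Nlb. Yc n x k j)\<^sup>2) / sqrt (real n)"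
proof -
  define D where "D j = real N * (real s + real h + 2) / sqrt (E_sb j)" for j
  define C where "C j = 4 * real Lsb * D j + 2 * real Lsb * (D j)\<^sup>2 + 2 * (real Lsb)\<^sup>2" for j
  have D: "D j \<ge> 0" for j by (simp add: D_def Esb_def)
  have bound: "\<bar>(wsb Lsb fsb \<alpha> n x j - real (n div Lsb) * E_sb j)\<^sup>2 / (real (n div Lsb) * E_sb j)
      - real Lsb * (\<Sum>k=1..Nlb. Yc n x k j)\<^sup>2\<bar> \<le> C j * (1 + (\<Sum>k=1..Nlb. Yc n x k j)\<^sup>2) / sqrt (real n)"
    if n: "n \<ge> n0" and j: "j \<le> K" for n x j
  proof -
    define S where "S = (\<Union>k\<in>{1..N}. window_cells (n div N) h s h_sb k)"
    have E: "sqrt (E_sb j) > 0" using E_sb_pos[OF j] by simp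
    have W: "wsb Lsb fsb \<alpha> n x j - real (n div Lsb) * E_sb j = sum (G_sb x j) {1..n div Lsb}"
      unfolding wsb_def G_sb_def by (simp add: sum_subtractf)
    have Y: "(\<Sum>k=1..Nlb. Yc n x k j) = sum (G_sb x j) S / (sqrt (E_sb j) * sqrt (real n))"
      unfolding sum_Ycal_eq_sum_Xcal S_def
      by (rule sum_Xcal_UN_window_cells[OF Xcal_sb[OF j] h_eq pos(4)]) simp_all
    have "\<bar>sum (G_sb x j) {1..n div Lsb} / sqrt (E_sb j) - sum (G_sb x j) S / sqrt (E_sb j)\<bar>
        = \<bar>sum (G_sb x j) {1..n div Lsb} - sum (G_sb x j) S\<bar> / sqrt (E_sb j)"
      using E by (simp flip: diff_divide_distrib)
    also have "\<dots> \<le> D j"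
      unfolding D_def using Tsb_sum_diff[OF n j] E unfolding S_def by (intro divide_right_mono) auto
    finally have sq: "\<bar>(sum (G_sb x j) {1..n div Lsb} / sqrt (E_sb j))\<^sup>2 / real (n div Lsb)
        - real Lsb * (sum (G_sb x j) S / sqrt (E_sb j))\<^sup>2 / real n\<bar>
        \<le> C j * (1 + (sum (G_sb x j) S / sqrt (E_sb j))\<^sup>2 / real n) / sqrt (real n)"
      unfolding C_def by (rule square_div_count_approx[OF pos(4) Lsb_le[OF n] D])
    have Y2: "(sum (G_sb x j) S / sqrt (E_sb j))\<^sup>2 / real n = (\<Sum>k=1..Nlb. Yc n x k j)\<^sup>2"
      unfolding Y by (simp add: power_divide power_mult_distrib)
    then have "real Lsb * (sum (G_sb x j) S / sqrt (E_sb j))\<^sup>2 / real n = real Lsb * (\<Sum>k=1..Nlb. Yc n x k j)\<^sup>2"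
      by (simp flip: times_divide_eq_right)
    moreover have "(sum (G_sb x j) {1..n div Lsb} / sqrt (E_sb j))\<^sup>2 / real (n div Lsb)
        = (wsb Lsb fsb \<alpha> n x j - real (n div Lsb) * E_sb j)\<^sup>2 / (real (n div Lsb) * E_sb j)"
      unfolding W using E_sb_pos[OF j] by (simp add: power_divide)
    ultimately show ?thesis using sq unfolding Y2 by simp
  qed
  have "C j \<ge> 0" for j using D by (simp add: C_def)
  then show thesis using bound by (rule that)
qed

lemma Tsb_approx:
  obtains C where "C \<ge> 0" and "\<And>n x. n \<ge> n0 \<Longrightarrow>
    \<bar>T_sb n x - real Lsb * (\<Sum>j=0..K. (\<Sum>k=1..Nlb. Yc n x k j)\<^sup>2)\<bar>
      \<le> C * (1 + (\<Sum>j=0..K. (\<Sum>k=1..Nlb. Yc n x k j)\<^sup>2)) / sqrt (real n)"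
proof -
  obtain C where C: "\<And>j. C j \<ge> 0" "\<And>n x j. n \<ge> n0 \<Longrightarrow> j \<le> K \<Longrightarrow>
    \<bar>(wsb Lsb fsb \<alpha> n x j - real (n div Lsb) * E_sb j)\<^sup>2 / (real (n div Lsb) * E_sb j)
      - real Lsb * (\<Sum>k=1..Nlb. Yc n x k j)\<^sup>2\<bar> \<le> C j * (1 + (\<Sum>k=1..Nlb. Yc n x k j)\<^sup>2) / sqrt (real n)"
    using Tsb_term_approx by blast
  have bound: "\<bar>T_sb n x - real Lsb * (\<Sum>j=0..K. (\<Sum>k=1..Nlb. Yc n x k j)\<^sup>2)\<bar>
      \<le> (\<Sum>j=0..K. C j) * (1 + (\<Sum>j=0..K. (\<Sum>k=1..Nlb. Yc n x k j)\<^sup>2)) / sqrt (real n)"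
    if n: "n \<ge> n0" for n x
  proof -
    define Z where "Z = (\<Sum>j=0..K. (\<Sum>k=1..Nlb. Yc n x k j)\<^sup>2)"
    have Zj: "(\<Sum>k=1..Nlb. Yc n x k j)\<^sup>2 \<le> Z" if "j \<le> K" for j
      unfolding Z_def using that by (intro member_le_sum) auto
    have eq: "T_sb n x - real Lsb * Z
        = (\<Sum>j=0..K. (wsb Lsb fsb \<alpha> n x j - real (n div Lsb) * E_sb j)\<^sup>2 / (real (n div Lsb) * E_sb j)
            - real Lsb * (\<Sum>k=1..Nlb. Yc n x k j)\<^sup>2)"
      unfolding Tsb_def Let_def Z_def by (simp add: sum_subtractf sum_distrib_left)
    have "\<bar>\<Sum>j=0..K. (wsb Lsb fsb \<alpha> n x j - real (n div Lsb) * E_sb j)\<^sup>2 / (real (n div Lsb) * E_sb j)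
            - real Lsb * (\<Sum>k=1..Nlb. Yc n x k j)\<^sup>2\<bar> \<le> (\<Sum>j=0..K. C j * (1 + Z) / sqrt (real n))"
    proof (intro order_trans[OF sum_abs] sum_mono)
      fix j assume "j \<in> {0..K}"
      then have j: "j \<le> K" by simp
      have "C j * (1 + (\<Sum>k=1..Nlb. Yc n x k j)\<^sup>2) / sqrt (real n) \<le> C j * (1 + Z) / sqrt (real n)"
        using Zj[OF j] C(1) by (intro divide_right_mono mult_left_mono) auto
      then show "\<bar>(wsb Lsb fsb \<alpha> n x j - real (n div Lsb) * E_sb j)\<^sup>2 / (real (n div Lsb) * E_sb j)
          - real Lsb * (\<Sum>k=1..Nlb. Yc n x k j)\<^sup>2\<bar> \<le> C j * (1 + Z) / sqrt (real n)"
        by (rule order_trans[OF C(2)[OF n j]])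
    qed
    also have "\<dots> = (\<Sum>j=0..K. C j) * (1 + Z) / sqrt (real n)"
      by (simp only: sum_divide_distrib[symmetric] sum_distrib_right[symmetric])
    finally show ?thesis unfolding eq[symmetric] Z_def .
  qed
  have "(\<Sum>j=0..K. C j) \<ge> 0" using C(1) by (intro sum_nonneg) auto
  then show thesis using bound by (rule that)
qed

lemma measurable_win_PX: "c + m \<le> k \<Longrightarrow> (\<lambda>\<theta>. win \<theta> c m) \<in> measurable (PX k) (PX m)"
  unfolding win_def by (intro measurable_restrict measurable_component_singleton) auto

lemma measurable_win_eps:
  "1 \<le> a \<Longrightarrow> a + m \<le> n + 1 \<Longrightarrow> (\<lambda>\<omega>. win (eps n \<omega>) a m) \<in> measurable (Q n) (PX m)"
  unfolding win_def by (intro measurable_restrict eps_meas) auto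

lemma eps_in_X: "\<omega> \<in> space (Q n) \<Longrightarrow> \<forall>i\<in>{1..n}. eps n \<omega> i \<in> X"
  using measurable_space[OF eps_meas] by (auto simp: space_restrict_space)

lemma fvec_measurable: "F j \<in> borel_measurable (PX s)"
proof -
  have ind: "(\<lambda>\<theta>. ind_sb j (win \<theta> (Lsb * (u - 1)) Lsb)) \<in> borel_measurable (PX s)"
    if "j \<le> K" "u \<in> {1..h div Lsb}" for u
  proof (rule measurable_compose[OF measurable_win_PX ind_sb_measurable[OF that(1)]])
    show "Lsb * (u - 1) + Lsb \<le> s"
      using that h_eq h_le_s mult_le_mono2[of u h_sb Lsb] by (cases u) (auto simp: h_sb_def)
  qed
  have fsm_win: "(\<lambda>\<theta>. fsm (win \<theta> (u - 1) msum)) \<in> borel_measurable (PX s)"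
    and flb_win: "(\<lambda>\<theta>. flb (win \<theta> (u - 1) mlb)) \<in> borel_measurable (PX s)" if "u \<in> {1..h}" for u
    using that window_fits
    by (auto intro!: measurable_compose[OF measurable_win_PX fsm_meas] measurable_compose[OF measurable_win_PX flb_meas])
  have F_eq: "F j = (if j \<le> K then (\<lambda>\<theta>. (\<Sum>u=1..h div Lsb. ind_sb j (win \<theta> (Lsb * (u - 1)) Lsb)) / sqrt (E_sb j))
      else if j = K + 1 then (\<lambda>\<theta>. (\<Sum>u=1..h. flb (win \<theta> (u - 1) mlb)) / \<sigma>_lb)
      else if j = K + 2 then (\<lambda>\<theta>. (\<Sum>u=1..h. fsm (win \<theta> (u - 1) msum)) / \<sigma>_sum)
      else (\<lambda>\<theta>. 0))"
    by (simp add: fvec_def fun_eq_iff)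
  consider (sb) "j \<le> K" | (lb) "\<not> j \<le> K" "j = K + 1" | (sum) "\<not> j \<le> K" "j \<noteq> K + 1" "j = K + 2"
    | (zero) "\<not> j \<le> K" "j \<noteq> K + 1" "j \<noteq> K + 2"
    by blast
  then show ?thesis
  proof cases
    case sb
    show ?thesis unfolding F_eq if_P[OF sb]
      by (intro borel_measurable_divide borel_measurable_sum borel_measurable_const) (rule ind[OF sb])
  next
    case lb
    show ?thesis unfolding F_eq if_not_P[OF lb(1)] if_P[OF lb(2)]
      by (intro borel_measurable_divide borel_measurable_sum borel_measurable_const) (rule flb_win)
  next
    case sum
    show ?thesis unfolding F_eq if_not_P[OF sum(1)] if_not_P[OF sum(2)] if_P[OF sum(3)]
      by (intro borel_measurable_divide borel_measurable_sum borel_measurable_const) (rule fsm_win)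
  next
    case zero
    show ?thesis unfolding F_eq if_not_P[OF zero(1)] if_not_P[OF zero(2)] if_not_P[OF zero(3)]
      by (rule borel_measurable_const)
  qed
qed

lemma Xcal_measurable:
  assumes "k \<le> N"
  shows "(\<lambda>\<omega>. Xc n (eps n \<omega>) k j) \<in> borel_measurable (Q n)"
proof -
  have "h * i + s \<le> n" if "h * i + s \<le> n div N * k" for i
  proof -
    have "n div N * k \<le> n div N * N" using assms by (rule mult_le_mono2)
    moreover have "n div N * N \<le> n" by (rule div_times_less_eq_dividend)
    ultimately show ?thesis using that by linarith
  qed
  then show ?thesis unfolding Xcal_def Let_def
    by (intro borel_measurable_times borel_measurable_const borel_measurable_sum borel_measurable_diff
        measurable_compose[OF measurable_win_eps fvec_measurable]) auto
qed

lemma Ycal_measurable: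
  assumes "k \<le> Nlb"
  shows "(\<lambda>\<omega>. Yc n (eps n \<omega>) k j) \<in> borel_measurable (Q n)"
  unfolding Ycal_def
proof (intro borel_measurable_sum Xcal_measurable)
  fix i assume "i \<in> {1..q}"
  then have "i \<le> q" by simp
  moreover have "q * (k - 1) \<le> q * (Nlb - 1)" using assms by (intro mult_le_mono2) simp
  moreover have "q * (Nlb - 1) + q = N" using pos(3) N_eq by (cases Nlb) auto
  ultimately show "q * (k - 1) + i \<le> N" by linarith
qed

lemma Tsum_measurable: "(\<lambda>\<omega>. T_sum n (eps n \<omega>)) \<in> borel_measurable (Q n)"
  unfolding Tsum_def
  by (intro borel_measurable_divide borel_measurable_sum borel_measurable_diff borel_measurable_const
      measurable_compose[OF measurable_win_eps fsm_meas]) auto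

lemma Tlb_measurable: "(\<lambda>\<omega>. T_lb n (eps n \<omega>)) \<in> borel_measurable (Q n)"
  unfolding Tlb_def Let_def Wlb_def
proof (intro borel_measurable_divide borel_measurable_sum borel_measurable_const borel_measurable_diff
    borel_measurable_power)
  fix k i assume k: "k \<in> {1..Nlb}" and i: "i \<in> {n div Nlb * (k - 1) + 1..n div Nlb * k + 1 - mlb}"
  have "n div Nlb * k \<le> n div Nlb * Nlb" using k by (intro mult_le_mono2) simp
  then have "n div Nlb * k \<le> n" using div_times_less_eq_dividend[of n Nlb] by linarith
  then have "i + mlb \<le> n + 1" using i by simp arith
  then show "(\<lambda>\<omega>. flb (win (eps n \<omega>) i mlb)) \<in> borel_measurable (Q n)"
    using i by (intro measurable_compose[OF measurable_win_eps flb_meas]) auto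
qed

lemma Tsb_measurable: "(\<lambda>\<omega>. T_sb n (eps n \<omega>)) \<in> borel_measurable (Q n)"
  unfolding Tsb_def Let_def wsb_def
proof (intro borel_measurable_divide borel_measurable_sum borel_measurable_const borel_measurable_diff
    borel_measurable_power borel_measurable_times)
  fix j i assume j: "j \<in> {0..K}" and i: "i \<in> {1..n div Lsb}"
  have "Lsb * i \<le> Lsb * (n div Lsb)" using i by (intro mult_le_mono2) simp
  then have "Lsb * i \<le> n" using times_div_less_eq_dividend[of Lsb n] by linarith
  moreover have "Lsb * (i - 1) + Lsb = Lsb * i" using i by (cases i) auto
  ultimately have "Lsb * (i - 1) + 1 + Lsb \<le> n + 1" by linarith
  then show "(\<lambda>\<omega>. ind_sb j (win (eps n \<omega>) (Lsb * (i - 1) + 1) Lsb)) \<in> borel_measurable (Q n)"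
    using j by (intro measurable_compose[OF measurable_win_eps ind_sb_measurable]) auto
qed

section \<open>Limit behaviour\<close>

abbreviation "Xvec n \<omega> \<equiv> vec_on ({1..N} \<times> {0..K + 2}) (\<lambda>(k, j). Xc n (eps n \<omega>) k j)"
abbreviation "Yvec n \<omega> \<equiv> vec_on ({1..Nlb} \<times> {0..K + 2}) (\<lambda>(k, j). Yc n (eps n \<omega>) k j)"
abbreviation "Tvec n \<omega> \<equiv> (T_sum n (eps n \<omega>), T_lb n (eps n \<omega>), T_sb n (eps n \<omega>))"

definition "limit_statistics y =
  ((\<Sum>k=1..Nlb. y (k, K + 2)), real Nlb * (\<Sum>k=1..Nlb. (y (k, K + 1))\<^sup>2),
   real Lsb * (\<Sum>j=0..K. (\<Sum>k=1..Nlb. y (k, j))\<^sup>2))"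

definition "block_sums v = vec_on ({1..Nlb} \<times> {0..K + 2}) (\<lambda>(k, j). \<Sum>i=1..q. v (q * (k - 1) + i, j))"

lemma limit_statistics_vec_on:
  "limit_statistics (vec_on ({1..Nlb} \<times> {0..K + 2}) (\<lambda>(k, j). G k j)) =
    ((\<Sum>k=1..Nlb. G k (K + 2)), real Nlb * (\<Sum>k=1..Nlb. (G k (K + 1))\<^sup>2),
     real Lsb * (\<Sum>j=0..K. (\<Sum>k=1..Nlb. G k j)\<^sup>2))"
  unfolding limit_statistics_def vec_on_def by simp

lemma block_index_range:
  assumes "k \<in> {1..Nlb}" "i \<in> {1..q}"
  shows "q * (k - 1) + i \<in> {1..N}"
proof -
  have "q * (k - 1) + i \<le> q * (k - 1) + q" using assms(2) by simp
  also have "\<dots> = q * k" using assms(1) by (cases k) (simp_all add: algebra_simps)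
  also have "\<dots> \<le> q * Nlb" using assms(1) by (intro mult_le_mono2) simp
  also have "\<dots> = N" by (rule N_eq[symmetric])
  finally show ?thesis using assms(2) by simp
qed

lemma block_sums_vec_on:
  "block_sums (vec_on ({1..N} \<times> {0..K + 2}) (\<lambda>(k, j). G k j))
     = vec_on ({1..Nlb} \<times> {0..K + 2}) (\<lambda>(k, j). \<Sum>i=1..q. G (q * (k - 1) + i) j)"
proof -
  have "(\<Sum>i=1..q. vec_on ({1..N} \<times> {0..K + 2}) (\<lambda>(k, j). G k j) (q * (k - 1) + i, j))
      = (\<Sum>i=1..q. G (q * (k - 1) + i) j)" if "(k, j) \<in> {1..Nlb} \<times> {0..K + 2}" for k j
    using that block_index_range by (intro sum.cong refl) (simp add: vec_on_def)
  note eq = this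
  show ?thesis unfolding block_sums_def
  proof (rule ext)
    fix z :: "nat \<times> nat"
    obtain k j where z: "z = (k, j)" by force
    show "vec_on ({1..Nlb} \<times> {0..K + 2})
          (\<lambda>(k, j). \<Sum>i=1..q. vec_on ({1..N} \<times> {0..K + 2}) (\<lambda>(k, j). G k j) (q * (k - 1) + i, j)) z
        = vec_on ({1..Nlb} \<times> {0..K + 2}) (\<lambda>(k, j). \<Sum>i=1..q. G (q * (k - 1) + i) j) z"
    proof (cases "(k, j) \<in> {1..Nlb} \<times> {0..K + 2}")
      case True
      show ?thesis unfolding z vec_on_def[of "{1..Nlb} \<times> {0..K + 2}"] if_P[OF True] prod.case
        by (rule eq[OF True])
    next
      case False
      show ?thesis unfolding z vec_on_def[of "{1..Nlb} \<times> {0..K + 2}"] if_not_P[OF False] ..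
    qed
  qed
qed

lemma continuous_limit_statistics: "continuous_on A limit_statistics"
  unfolding limit_statistics_def
  by (intro continuous_intros continuous_on_subset[OF continuous_on_product_coordinates]) auto

lemma continuous_block_sums: "continuous_on A block_sums"
  unfolding block_sums_def
proof (rule continuous_on_coordinatewise_then_product)
  fix z :: "nat \<times> nat"
  obtain k j where z: "z = (k, j)" by force
  show "continuous_on A (\<lambda>v. vec_on ({1..Nlb} \<times> {0..K + 2}) (\<lambda>(k, j). \<Sum>i=1..q. v (q * (k - 1) + i, j)) z)"
    unfolding vec_on_def z
    by (cases "(k, j) \<in> {1..Nlb} \<times> {0..K + 2}")
      (auto intro!: continuous_intros continuous_on_subset[OF continuous_on_product_coordinates])
qed

lemma block_sums_in_supp_on: "block_sums v \<in> supp_on ({1..Nlb} \<times> {0..K + 2})"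
  unfolding block_sums_def vec_on_def supp_on_def by auto

lemma limit_statistics_Yvec_measurable: "(\<lambda>\<omega>. limit_statistics (Yvec n \<omega>)) \<in> borel_measurable (Q n)"
  unfolding limit_statistics_vec_on
  by (intro borel_measurable_Pair borel_measurable_sum borel_measurable_times borel_measurable_power
      borel_measurable_const Ycal_measurable) auto

lemma norm_limit_statistics_vec_on_ge:
  fixes G :: "nat \<Rightarrow> nat \<Rightarrow> real"
  defines "y \<equiv> vec_on ({1..Nlb} \<times> {0..K + 2}) (\<lambda>(k, j). G k j)"
  shows "(\<Sum>k=1..Nlb. (G k (K + 1))\<^sup>2) \<le> norm (limit_statistics y)"
    and "(\<Sum>j=0..K. (\<Sum>k=1..Nlb. G k j)\<^sup>2) \<le> norm (limit_statistics y)"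
proof -
  have le_norm: "norm (fst (snd p)) \<le> norm p" "norm (snd (snd p)) \<le> norm p" for p :: "real \<times> real \<times> real"
  proof -
    obtain a b c where p: "p = (a, b, c)" by (cases p) auto
    have "norm b \<le> norm (b, c)" "norm c \<le> norm (b, c)" "norm (b, c) \<le> norm (a, b, c)"
      by (fact norm_fst_le, fact norm_snd_le, fact norm_snd_le)
    then show "norm (fst (snd p)) \<le> norm p" "norm (snd (snd p)) \<le> norm p" unfolding p by simp_all
  qed
  have le_mult: "S \<le> real d * S" if "0 \<le> S" "1 \<le> d" for S :: real and d :: nat
    using mult_right_mono[of 1 "real d" S] that by simp
  have "(\<Sum>k=1..Nlb. (G k (K + 1))\<^sup>2) \<le> real Nlb * (\<Sum>k=1..Nlb. (G k (K + 1))\<^sup>2)"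
    by (rule le_mult) (use pos(3) in \<open>simp_all add: sum_nonneg\<close>)
  also have "\<dots> \<le> norm (fst (snd (limit_statistics y)))" unfolding y_def limit_statistics_vec_on by simp
  also have "\<dots> \<le> norm (limit_statistics y)" by (rule le_norm)
  finally show "(\<Sum>k=1..Nlb. (G k (K + 1))\<^sup>2) \<le> norm (limit_statistics y)" .
  have "(\<Sum>j=0..K. (\<Sum>k=1..Nlb. G k j)\<^sup>2) \<le> real Lsb * (\<Sum>j=0..K. (\<Sum>k=1..Nlb. G k j)\<^sup>2)"
    by (rule le_mult) (use pos(4) in \<open>simp_all add: sum_nonneg\<close>)
  also have "\<dots> \<le> norm (snd (snd (limit_statistics y)))" unfolding y_def limit_statistics_vec_on by simp
  also have "\<dots> \<le> norm (limit_statistics y)" by (rule le_norm)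
  finally show "(\<Sum>j=0..K. (\<Sum>k=1..Nlb. G k j)\<^sup>2) \<le> norm (limit_statistics y)" .
qed

lemma Tsum_oP1: "oP1 Q (\<lambda>n \<omega>. T_sum n (eps n \<omega>) - (\<Sum>k=1..Nlb. Yc n (eps n \<omega>) k (K + 2)))"
proof -
  obtain C where C: "\<And>n x. n \<ge> n0 \<Longrightarrow> \<forall>i\<in>{1..n}. x i \<in> X \<Longrightarrow>
      \<bar>T_sum n x - (\<Sum>k=1..Nlb. Yc n x k (K + 2))\<bar> \<le> C / sqrt (real n)"
    using Tsum_approx by blast
  show ?thesis
  proof (rule oP1_of_bound[of n0, OF _ tendsto_const_divide_sqrt])
    show "\<forall>n\<ge>n0. \<forall>\<omega>\<in>space (Q n).
        \<bar>T_sum n (eps n \<omega>) - (\<Sum>k=1..Nlb. Yc n (eps n \<omega>) k (K + 2))\<bar> \<le> C / sqrt (real n)"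
    proof (intro allI impI ballI)
      fix n \<omega> assume "n0 \<le> n" "\<omega> \<in> space (Q n)"
      then show "\<bar>T_sum n (eps n \<omega>) - (\<Sum>k=1..Nlb. Yc n (eps n \<omega>) k (K + 2))\<bar> \<le> C / sqrt (real n)"
        using C eps_in_X by simp
    qed
  qed
qed

lemma statistics_approx:
  obtains C where "C \<ge> 0" and "\<And>n \<omega>. n \<ge> n0 \<Longrightarrow> \<omega> \<in> space (Q n) \<Longrightarrow>
    dist (Tvec n \<omega>) (limit_statistics (Yvec n \<omega>))
      \<le> C / sqrt (real n) * (1 + \<bar>norm (limit_statistics (Yvec n \<omega>))\<bar>)"
proof -
  obtain C1 where C1: "C1 \<ge> 0" "\<And>n x. n \<ge> n0 \<Longrightarrow> \<forall>i\<in>{1..n}. x i \<in> X \<Longrightarrow>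
      \<bar>T_sum n x - (\<Sum>k=1..Nlb. Yc n x k (K + 2))\<bar> \<le> C1 / sqrt (real n)"
    using Tsum_approx by blast
  obtain C2 where C2: "C2 \<ge> 0" "\<And>n x. n \<ge> n0 \<Longrightarrow> \<forall>i\<in>{1..n}. x i \<in> X \<Longrightarrow>
      \<bar>T_lb n x - real Nlb * (\<Sum>k=1..Nlb. (Yc n x k (K + 1))\<^sup>2)\<bar>
        \<le> C2 * (real Nlb + (\<Sum>k=1..Nlb. (Yc n x k (K + 1))\<^sup>2)) / sqrt (real n)"
    using Tlb_approx by blast
  obtain C3 where C3: "C3 \<ge> 0" "\<And>n x. n \<ge> n0 \<Longrightarrow>
      \<bar>T_sb n x - real Lsb * (\<Sum>j=0..K. (\<Sum>k=1..Nlb. Yc n x k j)\<^sup>2)\<bar>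
        \<le> C3 * (1 + (\<Sum>j=0..K. (\<Sum>k=1..Nlb. Yc n x k j)\<^sup>2)) / sqrt (real n)"
    using Tsb_approx by blast
  define C where "C = C1 + C2 * real Nlb + C3"
  have bound: "dist (Tvec n \<omega>) (limit_statistics (Yvec n \<omega>))
      \<le> C / sqrt (real n) * (1 + \<bar>norm (limit_statistics (Yvec n \<omega>))\<bar>)"
    if n: "n \<ge> n0" and \<omega>: "\<omega> \<in> space (Q n)" for n \<omega>
  proof -
    define P where "P = norm (limit_statistics (Yvec n \<omega>))"
    have P: "0 \<le> P" unfolding P_def by simp
    note x = eps_in_X[OF \<omega>]
    note S = norm_limit_statistics_vec_on_ge[of "\<lambda>k j. Yc n (eps n \<omega>) k j", folded P_def]
    have "\<bar>T_sum n (eps n \<omega>) - (\<Sum>k=1..Nlb. Yc n (eps n \<omega>) k (K + 2))\<bar> \<le> C1 * (1 + P) / sqrt (real n)"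
      by (rule abs_le_div_sqrt_mono[OF _ C1(1), of _ 1]) (use C1(2)[OF n x] P in simp_all)
    moreover have "\<bar>T_lb n (eps n \<omega>) - real Nlb * (\<Sum>k=1..Nlb. (Yc n (eps n \<omega>) k (K + 1))\<^sup>2)\<bar>
        \<le> C2 * (real Nlb * (1 + P)) / sqrt (real n)"
      by (rule abs_le_div_sqrt_mono[OF C2(2)[OF n x] C2(1)])
        (use S(1) P pos(3) mult_right_mono[of 1 "real Nlb" P] in \<open>simp add: algebra_simps\<close>)
    moreover have "\<bar>T_sb n (eps n \<omega>) - real Lsb * (\<Sum>j=0..K. (\<Sum>k=1..Nlb. Yc n (eps n \<omega>) k j)\<^sup>2)\<bar>
        \<le> C3 * (1 + P) / sqrt (real n)"
      by (rule abs_le_div_sqrt_mono[OF C3(2)[OF n] C3(1)]) (use S(2) in simp)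
    moreover have "dist (Tvec n \<omega>) (limit_statistics (Yvec n \<omega>))
        \<le> \<bar>T_sum n (eps n \<omega>) - (\<Sum>k=1..Nlb. Yc n (eps n \<omega>) k (K + 2))\<bar>
          + \<bar>T_lb n (eps n \<omega>) - real Nlb * (\<Sum>k=1..Nlb. (Yc n (eps n \<omega>) k (K + 1))\<^sup>2)\<bar>
          + \<bar>T_sb n (eps n \<omega>) - real Lsb * (\<Sum>j=0..K. (\<Sum>k=1..Nlb. Yc n (eps n \<omega>) k j)\<^sup>2)\<bar>"
      unfolding limit_statistics_vec_on by (rule dist_triple_le)
    moreover have "C / sqrt (real n) * (1 + \<bar>P\<bar>)
        = C1 * (1 + P) / sqrt (real n) + C2 * (real Nlb * (1 + P)) / sqrt (real n) + C3 * (1 + P) / sqrt (real n)"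
      using P by (simp add: C_def add_divide_distrib distrib_right)
    ultimately show ?thesis unfolding P_def[symmetric] by linarith
  qed
  have "C \<ge> 0" unfolding C_def using C1(1) C2(1) C3(1) by simp
  then show thesis using bound by (rule that)
qed

context
  fixes R :: "'r measure" and \<eta> :: "'r \<Rightarrow> nat \<Rightarrow> nat \<Rightarrow> real"
  assumes limit: "prob_space R
      \<and> (\<forall>k j. (\<lambda>r. \<eta> r k j) \<in> borel_measurable R)
      \<and> conv_distr Q (\<lambda>n \<omega>. Xvec n \<omega>) (supp_on ({1..N} \<times> {0..K + 2}))
          R (\<lambda>r. vec_on ({1..N} \<times> {0..K + 2}) (\<lambda>(k, j). \<eta> r k j))"
begin

abbreviation "\<zeta> r k j \<equiv> \<Sum>i=1..q. \<eta> r (q * (k - 1) + i) j"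

lemmas prob_space_R = conjunct1[OF limit]
  and conv_Xvec = conjunct2[OF conjunct2[OF limit]]

lemma \<eta>_measurable: "(\<lambda>r. \<eta> r k j) \<in> borel_measurable R"
  using conjunct1[OF conjunct2[OF limit]] by blast

lemma conv_distr_Yvec:
  "conv_distr Q (\<lambda>n \<omega>. Yvec n \<omega>) (supp_on ({1..Nlb} \<times> {0..K + 2}))
     R (\<lambda>r. vec_on ({1..Nlb} \<times> {0..K + 2}) (\<lambda>(k, j). \<zeta> r k j))"
proof -
  have "block_sums ` supp_on ({1..N} \<times> {0..K + 2}) \<subseteq> supp_on ({1..Nlb} \<times> {0..K + 2})"
    using block_sums_in_supp_on by blast
  from conv_distr_continuous_map[OF conv_Xvec continuous_block_sums this] show ?thesis
    unfolding block_sums_vec_on Ycal_def .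
qed

lemma conv_distr_limit_statistics:
  "conv_distr Q (\<lambda>n \<omega>. limit_statistics (Yvec n \<omega>)) UNIV
     R (\<lambda>r. limit_statistics (vec_on ({1..Nlb} \<times> {0..K + 2}) (\<lambda>(k, j). \<zeta> r k j)))"
  by (rule conv_distr_continuous_map[OF conv_distr_Yvec continuous_limit_statistics]) simp

lemma OP1_limit_statistics: "OP1 Q (\<lambda>n \<omega>. norm (limit_statistics (Yvec n \<omega>)))"
proof (rule OP1_of_conv_distr[OF Q _ conv_distr_Yvec])
  show "prob_space R" by (rule prob_space_R)
  show "continuous_on (supp_on ({1..Nlb} \<times> {0..K + 2})) (\<lambda>y. norm (limit_statistics y))"
    by (intro continuous_on_norm continuous_limit_statistics)
  show "(\<lambda>\<omega>. norm (limit_statistics (Yvec n \<omega>))) \<in> borel_measurable (Q n)" for n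
    using limit_statistics_Yvec_measurable by measurable
  have "(\<lambda>r. limit_statistics (vec_on ({1..Nlb} \<times> {0..K + 2}) (\<lambda>(k, j). \<zeta> r k j)))
      \<in> borel_measurable R"
    unfolding limit_statistics_vec_on
    by (intro borel_measurable_Pair borel_measurable_sum borel_measurable_times
        borel_measurable_power borel_measurable_const \<eta>_measurable)
  then show "(\<lambda>r. norm (limit_statistics (vec_on ({1..Nlb} \<times> {0..K + 2}) (\<lambda>(k, j). \<zeta> r k j))))
      \<in> borel_measurable R"
    by measurable
qed

lemma statistics_oP1:
  assumes "\<And>n \<omega>. \<bar>Z n \<omega>\<bar> \<le> dist (Tvec n \<omega>) (limit_statistics (Yvec n \<omega>))"
  shows "oP1 Q Z"
proof -
  obtain C where C: "C \<ge> 0" "\<And>n \<omega>. n \<ge> n0 \<Longrightarrow> \<omega> \<in> space (Q n) \<Longrightarrow>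
      dist (Tvec n \<omega>) (limit_statistics (Yvec n \<omega>))
        \<le> C / sqrt (real n) * (1 + \<bar>norm (limit_statistics (Yvec n \<omega>))\<bar>)"
    using statistics_approx by blast
  show ?thesis
  proof (rule oP1_of_OP1_bound[OF Q _ tendsto_const_divide_sqrt _ OP1_limit_statistics])
    show "\<forall>n\<ge>n0. \<forall>\<omega>\<in>space (Q n). \<bar>Z n \<omega>\<bar>
        \<le> C / sqrt (real n) * (1 + \<bar>norm (limit_statistics (Yvec n \<omega>))\<bar>)"
    proof (intro allI impI ballI)
      fix n \<omega> assume "n0 \<le> n" "\<omega> \<in> space (Q n)"
      from assms[of n \<omega>] C(2)[OF this] show "\<bar>Z n \<omega>\<bar>
          \<le> C / sqrt (real n) * (1 + \<bar>norm (limit_statistics (Yvec n \<omega>))\<bar>)"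
        by (rule order_trans)
    qed
    show "0 \<le> C / sqrt (real n)" for n using C(1) by simp
    show "(\<lambda>\<omega>. norm (limit_statistics (Yvec n \<omega>))) \<in> borel_measurable (Q n)" for n
      using limit_statistics_Yvec_measurable by measurable
  qed
qed

lemma Tlb_oP1:
  "oP1 Q (\<lambda>n \<omega>. T_lb n (eps n \<omega>) - real Nlb * (\<Sum>k=1..Nlb. (Yc n (eps n \<omega>) k (K + 1))\<^sup>2))"
  by (rule statistics_oP1) (unfold limit_statistics_vec_on, rule abs_diff_le_dist_triple)

lemma Tsb_oP1:
  "oP1 Q (\<lambda>n \<omega>. T_sb n (eps n \<omega>) - real Lsb * (\<Sum>j=0..K. (\<Sum>k=1..Nlb. Yc n (eps n \<omega>) k j)\<^sup>2))"
  by (rule statistics_oP1) (unfold limit_statistics_vec_on, rule abs_diff_le_dist_triple)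

lemma conv_distr_statistics:
  "conv_distr Q (\<lambda>n \<omega>. Tvec n \<omega>) UNIV
     R (\<lambda>r. ((\<Sum>k=1..Nlb. \<zeta> r k (K + 2)), real Nlb * (\<Sum>k=1..Nlb. (\<zeta> r k (K + 1))\<^sup>2),
             real Lsb * (\<Sum>j=0..K. (\<Sum>k=1..Nlb. \<zeta> r k j)\<^sup>2)))"
proof -
  have "conv_distr Q (\<lambda>n \<omega>. Tvec n \<omega>) UNIV
      R (\<lambda>r. limit_statistics (vec_on ({1..Nlb} \<times> {0..K + 2}) (\<lambda>(k, j). \<zeta> r k j)))"
  proof (rule conv_distr_of_oP1_dist[OF Q conv_distr_limit_statistics OP1_limit_statistics])
    show "oP1 Q (\<lambda>n \<omega>. dist (Tvec n \<omega>) (limit_statistics (Yvec n \<omega>)))"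
      by (rule statistics_oP1) simp
    show "(\<lambda>\<omega>. limit_statistics (Yvec n \<omega>)) \<in> borel_measurable (Q n)" for n
      by (rule limit_statistics_Yvec_measurable)
    show "(\<lambda>\<omega>. Tvec n \<omega>) \<in> borel_measurable (Q n)" for n
      by (intro borel_measurable_Pair Tsum_measurable Tlb_measurable Tsb_measurable)
  qed
  then show ?thesis unfolding limit_statistics_vec_on .
qed

end

end

theorem theorem1:
  fixes X :: "'a::euclidean_space set"
    and P0 :: "'a measure"
    and msum mlb Nlb Lsb K :: nat
    and fsm flb fsb :: "(nat \<Rightarrow> 'a) \<Rightarrow> real"
    and \<alpha> :: "nat \<Rightarrow> real set"
    and N s h :: nat
    and Q :: "nat \<Rightarrow> 'w measure"
    and eps :: "nat \<Rightarrow> 'w \<Rightarrow> nat \<Rightarrow> 'a"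
  assumes P0: "prob_space P0" "sets P0 = sets (restrict_space borel X)"
    and pos: "msum \<ge> 1" "mlb \<ge> 1" "Nlb \<ge> 1" "Lsb \<ge> 1" "K \<ge> 1"
    and fsm_meas: "fsm \<in> borel_measurable (PiM {..<msum} (\<lambda>_. restrict_space borel X))"
    and fsm_bdd: "\<exists>B. \<forall>\<theta> \<in> space (PiM {..<msum} (\<lambda>_. restrict_space borel X)). \<bar>fsm \<theta>\<bar> \<le> B"
    and flb_meas: "flb \<in> borel_measurable (PiM {..<mlb} (\<lambda>_. restrict_space borel X))"
    and flb_bdd: "\<exists>B. \<forall>\<theta> \<in> space (PiM {..<mlb} (\<lambda>_. restrict_space borel X)). \<bar>flb \<theta>\<bar> \<le> B"
    and fsb_meas: "fsb \<in> borel_measurable (PiM {..<Lsb} (\<lambda>_. restrict_space borel X))"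
    and \<alpha>_meas: "\<And>j. j \<le> K \<Longrightarrow> \<alpha> j \<in> sets borel"
    and \<alpha>_ne: "\<And>j. j \<le> K \<Longrightarrow> \<alpha> j \<noteq> {}"
    and \<alpha>_disj: "\<And>i j. i \<le> K \<Longrightarrow> j \<le> K \<Longrightarrow> i \<noteq> j \<Longrightarrow> \<alpha> i \<inter> \<alpha> j = {}"
    and \<alpha>_cover: "(\<Union>j\<in>{0..K}. \<alpha> j) = fsb ` space (PiM {..<Lsb} (\<lambda>_. restrict_space borel X))"
    and sig_sum: "sig2H0 P0 msum fsm > 0"
    and sig_lb: "sig2H0 P0 mlb flb > 0"
    and Esb_pos: "\<And>j. j \<le> K \<Longrightarrow> Esb P0 Lsb fsb \<alpha> j > 0"
    and Nsh: "N \<ge> 1" "s \<ge> 1" "h \<ge> 1" "s \<ge> h + max msum mlb - 1" "Nlb dvd N" "Lsb dvd h"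
    and Q: "\<And>n. prob_space (Q n)"
    and eps_meas: "\<And>n i. i \<in> {1..n} \<Longrightarrow> (\<lambda>\<omega>. eps n \<omega> i) \<in> measurable (Q n) (restrict_space borel X)"
  shows
   "oP1 Q (\<lambda>n \<omega>. Tsum P0 msum fsm n (eps n \<omega>)
             - (\<Sum>k=1..Nlb. Ycal P0 msum fsm mlb flb Nlb Lsb K fsb \<alpha> N s h n (eps n \<omega>) k (K + 2)))
    \<and>
    (\<forall>(R :: 'r measure) (\<eta> :: 'r \<Rightarrow> nat \<Rightarrow> nat \<Rightarrow> real).
      prob_space R
      \<and> (\<forall>k j. (\<lambda>r. \<eta> r k j) \<in> borel_measurable R)
      \<and> conv_distr Q
          (\<lambda>n \<omega>. vec_on ({1..N} \<times> {0..K + 2})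
                   (\<lambda>(k, j). Xcal P0 msum fsm mlb flb Lsb K fsb \<alpha> N s h n (eps n \<omega>) k j))
          (supp_on ({1..N} \<times> {0..K + 2}))
          R (\<lambda>r. vec_on ({1..N} \<times> {0..K + 2}) (\<lambda>(k, j). \<eta> r k j))
      \<longrightarrow>
      (let \<zeta> = (\<lambda>r k j. \<Sum>i=1..N div Nlb. \<eta> r ((N div Nlb) * (k - 1) + i) j) in
        oP1 Q (\<lambda>n \<omega>. Tlb P0 Nlb mlb flb n (eps n \<omega>)
             - real Nlb * (\<Sum>k=1..Nlb. (Ycal P0 msum fsm mlb flb Nlb Lsb K fsb \<alpha> N s h n (eps n \<omega>) k (K + 1))\<^sup>2))
      \<and> oP1 Q (\<lambda>n \<omega>. Tsb P0 Lsb K fsb \<alpha> n (eps n \<omega>)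
             - real Lsb * (\<Sum>j=0..K. (\<Sum>k=1..Nlb. Ycal P0 msum fsm mlb flb Nlb Lsb K fsb \<alpha> N s h n (eps n \<omega>) k j)\<^sup>2))
      \<and> conv_distr Q
          (\<lambda>n \<omega>. vec_on ({1..Nlb} \<times> {0..K + 2})
                   (\<lambda>(k, j). Ycal P0 msum fsm mlb flb Nlb Lsb K fsb \<alpha> N s h n (eps n \<omega>) k j))
          (supp_on ({1..Nlb} \<times> {0..K + 2}))
          R (\<lambda>r. vec_on ({1..Nlb} \<times> {0..K + 2}) (\<lambda>(k, j). \<zeta> r k j))
      \<and> conv_distr Q
          (\<lambda>n \<omega>. (Tsum P0 msum fsm n (eps n \<omega>), Tlb P0 Nlb mlb flb n (eps n \<omega>), Tsb P0 Lsb K fsb \<alpha> n (eps n \<omega>)))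
          UNIV
          R (\<lambda>r. ((\<Sum>k=1..Nlb. \<zeta> r k (K + 2)),
                  real Nlb * (\<Sum>k=1..Nlb. (\<zeta> r k (K + 1))\<^sup>2),
                  real Lsb * (\<Sum>j=0..K. (\<Sum>k=1..Nlb. \<zeta> r k j)\<^sup>2)))))"
proof -
  interpret block_statistics X P0 msum mlb Nlb Lsb K fsm flb fsb \<alpha> N s h Q eps
    by (rule block_statistics.intro) (fact+)
  show ?thesis
    unfolding Let_def
    by (intro conjI allI impI; rule Tsum_oP1 Tlb_oP1 Tsb_oP1 conv_distr_Yvec conv_distr_statistics)
qed

end
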